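(* Let $\Omega$ be a verification operator for $|\Psi\rangle$ with second largest eigenvalue $\beta$ and smallest eigenvalue $\tau$, and take $N=1$. If $\beta\ge1/2$, then $$\zeta(1,\delta,\Omega)=\begin{cases}0,&0\le\delta\le\beta,\\ \frac{\beta(\delta-\beta)}{1-\beta},&\beta\le\delta\le\frac{1+\beta}{2},\\ \frac{\delta(2-\beta)-1}{1-\beta},&\frac{1+\beta}{2}\le\delta\le1.\end{cases}$$ If $\beta<1/2$, then $$\zeta(1,\delta,\Omega)=\begin{cases}0,&0\le\delta\le\beta,\\ \frac{\tau(\delta-\beta)}{1+\tau-2\beta},&\beta\le\delta\le\frac{1+\tau}{2},\\ \delta-\frac12,&\frac{1+\tau}{2}\le\delta\le\frac{1+\beta}{2},\\ \frac{\delta(2-\beta)-1}{1-\beta},&\frac{1+\beta}{2}\le\delta\le1.\end{cases}$$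
   Context: Let $\mathcal H$ be a Hilbert space of finite dimension $D\ge2$ and $|\Psi\rangle\in\mathcal H$ a unit vector. A verification operator for $|\Psi\rangle$ is a Hermitian operator $\Omega$ on $\mathcal H$ with $0\le\Omega\le1$, $\Omega|\Psi\rangle=|\Psi\rangle$, whose eigenvalue $1$ is nondegenerate; its eigenvalues are $1=\lambda_1>\lambda_2\ge\dots\ge\lambda_D\ge0$, with $\beta=\lambda_2$, $\tau=\lambda_D$. For an integer $N\ge1$ and a density operator $\rho$ on $\mathcal H^{\otimes(N+1)}$ put $p_\rho=\mathrm{tr}[(\Omega^{\otimes N}\otimes 1)\rho]$ and $f_\rho=\mathrm{tr}[(\Omega^{\otimes N}\otimes|\Psi\rangle\langle\Psi|)\rho]$, and $\zeta(N,\delta,\Omega)=\min\{f_\rho:p_\rho\ge\delta\}$ for $0\le\delta\le1$, the minimum over permutation-invariant density operators on $\mathcal H^{\otimes(N+1)}$. *)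

theory Defs
  imports "Jordan_Normal_Form.Char_Poly"
begin

definition adj :: "complex mat \<Rightarrow> complex mat" where
  "adj A = mat (dim_col A) (dim_row A) (\<lambda>(i,j). cnj (A $$ (j,i)))"

definition hermitian_mat :: "complex mat \<Rightarrow> bool" where
  "hermitian_mat A \<longleftrightarrow> square_mat A \<and> adj A = A"

definition psd :: "complex mat \<Rightarrow> bool" where
  "psd A \<longleftrightarrow> hermitian_mat A \<and>
     (\<forall>v \<in> carrier_vec (dim_row A). 0 \<le> Re ((A *\<^sub>v v) \<bullet>c v))"

definition mtrace :: "complex mat \<Rightarrow> complex" where
  "mtrace A = (\<Sum>i<dim_row A. A $$ (i,i))"

definition density_op :: "nat \<Rightarrow> complex mat \<Rightarrow> bool" where
  "density_op n \<rho> \<longleftrightarrow> \<rho> \<in> carrier_mat n n \<and> psd \<rho> \<and> mtrace \<rho> = 1"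

text \<open>Kronecker (tensor) product; index i of C^m (x) C^p is (i div p, i mod p).\<close>
definition kron :: "complex mat \<Rightarrow> complex mat \<Rightarrow> complex mat" where
  "kron A B = mat (dim_row A * dim_row B) (dim_col A * dim_col B)
     (\<lambda>(i,j). A $$ (i div dim_row B, j div dim_col B) * B $$ (i mod dim_row B, j mod dim_col B))"

definition swap_op :: "nat \<Rightarrow> complex mat" where
  "swap_op D = mat (D*D) (D*D) (\<lambda>(i,j). if j = (i mod D) * D + i div D then 1 else 0)"

text \<open>Permutation invariance on two copies: invariant under the swap (the only
  nontrivial permutation of two tensor factors).\<close>
definition perm_invariant2 :: "nat \<Rightarrow> complex mat \<Rightarrow> bool" where
  "perm_invariant2 D \<rho> \<longleftrightarrow> swap_op D * \<rho> * adj (swap_op D) = \<rho>"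

definition proj :: "complex vec \<Rightarrow> complex mat" where
  "proj \<Psi> = mat (dim_vec \<Psi>) (dim_vec \<Psi>) (\<lambda>(i,j). \<Psi> $ i * cnj (\<Psi> $ j))"

definition verification_op :: "nat \<Rightarrow> complex vec \<Rightarrow> complex mat \<Rightarrow> bool" where
  "verification_op D \<Psi> \<Omega> \<longleftrightarrow>
     \<Psi> \<in> carrier_vec D \<and> \<Psi> \<bullet>c \<Psi> = 1 \<and>
     \<Omega> \<in> carrier_mat D D \<and> hermitian_mat \<Omega> \<and> psd \<Omega> \<and> psd (1\<^sub>m D - \<Omega>) \<and>
     \<Omega> *\<^sub>v \<Psi> = \<Psi> \<and>
     (\<forall>v \<in> carrier_vec D. \<Omega> *\<^sub>v v = v \<longrightarrow> (\<exists>c. v = c \<cdot>\<^sub>v \<Psi>))"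

text \<open>beta = second largest eigenvalue (eigenvalue 1 is nondegenerate), tau = smallest.\<close>
definition second_eig :: "complex mat \<Rightarrow> real \<Rightarrow> bool" where
  "second_eig \<Omega> \<beta> \<longleftrightarrow> eigenvalue \<Omega> (complex_of_real \<beta>) \<and> \<beta> < 1 \<and>
     (\<forall>l::real. eigenvalue \<Omega> (complex_of_real l) \<and> l \<noteq> 1 \<longrightarrow> l \<le> \<beta>)"

definition smallest_eig :: "complex mat \<Rightarrow> real \<Rightarrow> bool" where
  "smallest_eig \<Omega> \<tau> \<longleftrightarrow> eigenvalue \<Omega> (complex_of_real \<tau>) \<and>
     (\<forall>l::real. eigenvalue \<Omega> (complex_of_real l) \<longrightarrow> \<tau> \<le> l)"

definition p_val :: "nat \<Rightarrow> complex mat \<Rightarrow> complex mat \<Rightarrow> real" where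
  "p_val D \<Omega> \<rho> = Re (mtrace (kron \<Omega> (1\<^sub>m D) * \<rho>))"

definition f_val :: "complex vec \<Rightarrow> complex mat \<Rightarrow> complex mat \<Rightarrow> real" where
  "f_val \<Psi> \<Omega> \<rho> = Re (mtrace (kron \<Omega> (proj \<Psi>) * \<rho>))"

text \<open>The feasible values of f_rho; zeta(1,delta,Omega) is the minimum of this set.\<close>
definition feasible_f :: "nat \<Rightarrow> complex vec \<Rightarrow> complex mat \<Rightarrow> real \<Rightarrow> real set" where
  "feasible_f D \<Psi> \<Omega> \<delta> = {f_val \<Psi> \<Omega> \<rho> | \<rho>.
      density_op (D*D) \<rho> \<and> perm_invariant2 D \<rho> \<and> p_val D \<Omega> \<rho> \<ge> \<delta>}"

definition is_min :: "real set \<Rightarrow> real \<Rightarrow> bool" where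
  "is_min S x \<longleftrightarrow> x \<in> S \<and> (\<forall>y\<in>S. x \<le> y)"

end

(*
  Diagonalise Omega in an orthonormal eigenbasis u_1, ..., u_D with eigenvalues lam_k.  As the
  eigenvalue 1 is nondegenerate, the projector onto Psi is diagonal in the same basis, with entry 1
  exactly where lam_k = 1.  In the product basis u_i (x) u_j both Omega (x) 1 and
  Omega (x) |Psi><Psi| are diagonal, so p_rho and f_rho only depend on the diagonal w of rho in that
  basis.  Permutation invariance makes w a symmetric probability distribution on pairs, and every
  such w is the diagonal of a permutation-invariant state.  Hence zeta is the value of a linear
  program: minimise f = sum lam_i [lam_j = 1] w_ij subject to p = sum lam_i w_ij >= delta.

  Since every lam_k is 1 or lies in [tau, beta], symmetrising pairwise shows that (p, f) always lies
  above the lower boundary of the convex hull of (beta, 0), ((1 + beta)/2, beta/2),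
  ((1 + tau)/2, tau/2) and (1, 1), and mixing the corresponding symmetrised eigenpairs attains it.
  For beta >= 1/2 the point ((1 + tau)/2, tau/2) is not a vertex of that boundary, which gives the
  three-piece formula; for beta < 1/2 the boundary has four pieces.
*)

theory Submission
  imports Defs "Jordan_Normal_Form.Spectral_Radius"
begin

section \<open>Conjugate transpose and unitary matrices\<close>

lemma dim_row_adj [simp]: "dim_row (adj A) = dim_col A"
  and dim_col_adj [simp]: "dim_col (adj A) = dim_row A"
  by (simp_all add: adj_def)

lemma adj_carrier_mat [simp]: "A \<in> carrier_mat n m \<Longrightarrow> adj A \<in> carrier_mat m n"
  by (intro carrier_matI) auto

lemma index_adj [simp]: "i < dim_col A \<Longrightarrow> j < dim_row A \<Longrightarrow> adj A $$ (i, j) = cnj (A $$ (j, i))"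
  by (simp add: adj_def)

lemma adj_adj [simp]: "adj (adj A) = A"
  by (rule eq_matI) auto

lemma adj_one_mat [simp]: "adj (1\<^sub>m n) = 1\<^sub>m n"
  by (rule eq_matI) auto

lemma adj_mult:
  assumes "A \<in> carrier_mat n m" "B \<in> carrier_mat m k"
  shows "adj (A * B) = adj B * adj A"
proof (rule eq_matI)
  fix i j assume ij: "i < dim_row (adj B * adj A)" "j < dim_col (adj B * adj A)"
  have "adj (A * B) $$ (i, j) = cnj (\<Sum>l<m. A $$ (j, l) * B $$ (l, i))"
    using assms ij by (simp add: scalar_prod_def atLeast0LessThan)
  also have "\<dots> = (adj B * adj A) $$ (i, j)"
    using assms ij by (simp add: scalar_prod_def atLeast0LessThan mult.commute)
  finally show "adj (A * B) $$ (i, j) = (adj B * adj A) $$ (i, j)" .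
qed (use assms in auto)

lemma cscalar_prod_adj:
  assumes "A \<in> carrier_mat n m" "x \<in> carrier_vec m" "y \<in> carrier_vec n"
  shows "(A *\<^sub>v x) \<bullet>c y = x \<bullet>c (adj A *\<^sub>v y)"
proof -
  have "(A *\<^sub>v x) \<bullet>c y = (\<Sum>i<n. \<Sum>j<m. A $$ (i, j) * x $ j * cnj (y $ i))"
    using assms by (simp add: scalar_prod_def atLeast0LessThan sum_distrib_right)
  also have "\<dots> = (\<Sum>j<m. \<Sum>i<n. x $ j * cnj (cnj (A $$ (i, j)) * y $ i))"
    by (subst sum.swap) (simp add: mult_ac)
  also have "\<dots> = x \<bullet>c (adj A *\<^sub>v y)"
    using assms by (simp add: scalar_prod_def atLeast0LessThan sum_distrib_left)
  finally show ?thesis .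
qed

lemma mtrace_mult_comm:
  assumes "A \<in> carrier_mat n m" "B \<in> carrier_mat m n"
  shows "mtrace (A * B) = mtrace (B * A)"
proof -
  have "mtrace (A * B) = (\<Sum>i<n. \<Sum>j<m. A $$ (i, j) * B $$ (j, i))"
    using assms by (simp add: mtrace_def scalar_prod_def atLeast0LessThan)
  also have "\<dots> = (\<Sum>j<m. \<Sum>i<n. B $$ (j, i) * A $$ (i, j))"
    by (subst sum.swap) (simp add: mult.commute)
  also have "\<dots> = mtrace (B * A)"
    using assms by (simp add: mtrace_def scalar_prod_def atLeast0LessThan)
  finally show ?thesis .
qed

lemma cscalar_prod_smult:
  assumes "v \<in> carrier_vec n" "w \<in> carrier_vec n"
  shows "(a \<cdot>\<^sub>v v) \<bullet>c (b \<cdot>\<^sub>v w) = a * cnj b * (v \<bullet>c w)"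
  using assms by (simp add: conjugate_smult_vec)

definition unitary_mat :: "nat \<Rightarrow> complex mat \<Rightarrow> bool" where
  "unitary_mat n U \<longleftrightarrow> U \<in> carrier_mat n n \<and> adj U * U = 1\<^sub>m n \<and> U * adj U = 1\<^sub>m n"

lemma unitary_matI:
  assumes "U \<in> carrier_mat n n" "adj U * U = 1\<^sub>m n"
  shows "unitary_mat n U"
  using assms mat_mult_left_right_inverse[OF adj_carrier_mat[OF assms(1)] assms]
  unfolding unitary_mat_def by blast

lemma unitary_matD:
  assumes "unitary_mat n U"
  shows "U \<in> carrier_mat n n" "adj U \<in> carrier_mat n n" "adj U * U = 1\<^sub>m n" "U * adj U = 1\<^sub>m n"
  using assms unfolding unitary_mat_def by auto

lemma unitary_mat_mult:
  assumes "unitary_mat n U" "unitary_mat n V"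
  shows "unitary_mat n (U * V)"
proof (rule unitary_matI)
  note U = unitary_matD[OF assms(1)] and V = unitary_matD[OF assms(2)]
  show "U * V \<in> carrier_mat n n" using U V by simp
  have "adj U * (U * V) = V"
    using U V by (metis assoc_mult_mat left_mult_one_mat)
  then show "adj (U * V) * (U * V) = 1\<^sub>m n"
    using U V by (simp add: adj_mult assoc_mult_mat[of _ n n _ n _ n])
qed

lemma unitary_mat_of_cols:
  assumes us: "set us \<subseteq> carrier_vec n" "length us = n"
    and orth: "\<And>i j. i < n \<Longrightarrow> j < n \<Longrightarrow> us ! i \<bullet>c us ! j = of_bool (i = j)"
  shows "unitary_mat n (mat_of_cols n us)"
proof (rule unitary_matI)
  show U: "mat_of_cols n us \<in> carrier_mat n n" using mat_of_cols_carrier(1)[of n us] us by simp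
  show "adj (mat_of_cols n us) * mat_of_cols n us = 1\<^sub>m n"
  proof (rule eq_matI)
    fix i j assume "i < dim_row (1\<^sub>m n)" "j < dim_col (1\<^sub>m n)"
    then have ij: "i < n" "j < n" by auto
    then have "us ! i \<in> carrier_vec n" "us ! j \<in> carrier_vec n" using us by auto
    then have "(adj (mat_of_cols n us) * mat_of_cols n us) $$ (i, j) = us ! j \<bullet>c us ! i"
      using U ij us by (auto simp: scalar_prod_def mat_of_cols_index mult.commute intro!: sum.cong)
    then show "(adj (mat_of_cols n us) * mat_of_cols n us) $$ (i, j) = 1\<^sub>m n $$ (i, j)"
      using orth ij by auto
  qed (use U in auto)
qed

definition normalize_vec :: "complex vec \<Rightarrow> complex vec" where
  "normalize_vec w = complex_of_real (1 / sqrt (Re (w \<bullet>c w))) \<cdot>\<^sub>v w"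

lemma normalize_vec_carrier [simp]: "w \<in> carrier_vec n \<Longrightarrow> normalize_vec w \<in> carrier_vec n"
  by (simp add: normalize_vec_def)

lemma unitary_mat_of_corthogonal:
  assumes ws: "corthogonal ws" "set ws \<subseteq> carrier_vec n" "length ws = n"
  shows "unitary_mat n (mat_of_cols n (map normalize_vec ws))"
proof (rule unitary_mat_of_cols)
  show "set (map normalize_vec ws) \<subseteq> carrier_vec n" "length (map normalize_vec ws) = n"
    using ws by auto
  fix i j assume ij: "i < n" "j < n"
  define c where "c k = complex_of_real (1 / sqrt (Re (ws ! k \<bullet>c ws ! k)))" for k
  have ws_k: "ws ! k \<in> carrier_vec n" "ws ! k \<bullet>c ws ! k \<noteq> 0" if "k < n" for k
    using ws that corthogonalD[OF ws(1), of k k] by auto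
  have unit: "c k * cnj (c k) * (ws ! k \<bullet>c ws ! k) = 1" if k: "k < n" for k
  proof -
    obtain r where r: "ws ! k \<bullet>c ws ! k = complex_of_real r" "r > 0"
      using conjugate_square_greater_0_vec[OF ws_k(1)[OF k]] ws_k(2)[OF k]
      by (auto simp: less_complex_def complex_eq_iff intro: that[of "Re (ws ! k \<bullet>c ws ! k)"])
    have "1 / sqrt r * (1 / sqrt r) * r = 1" using r(2) by (simp add: field_simps)
    then show ?thesis unfolding c_def r(1) by (simp flip: of_real_mult)
  qed
  have "map normalize_vec ws ! i \<bullet>c map normalize_vec ws ! j = c i * cnj (c j) * (ws ! i \<bullet>c ws ! j)"
    using ij ws(3) by (simp add: normalize_vec_def c_def cscalar_prod_smult[OF ws_k(1) ws_k(1)])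
  then show "map normalize_vec ws ! i \<bullet>c map normalize_vec ws ! j = of_bool (i = j)"
    using unit[OF ij(1)] corthogonalD[OF ws(1), of i j] ij ws(3) by auto
qed

lemma unitary_completion:
  fixes v :: "complex vec"
  assumes v: "v \<in> carrier_vec n" "v \<noteq> 0\<^sub>v n"
  obtains W c where "unitary_mat n W" "col W 0 = c \<cdot>\<^sub>v v"
proof -
  interpret cof_vec_space n "TYPE(complex)" .
  define bs where "bs = basis_completion v"
  have bs: "set bs \<subseteq> carrier_vec n" "distinct bs" "\<not> lin_dep (set bs)" "length bs = n" "hd bs = v"
    using basis_completion[OF v] unfolding bs_def by auto
  have "n \<noteq> 0" using v by (auto intro: eq_vecI)
  then obtain rest where bs_eq: "bs = v # rest" using bs(4,5) by (cases bs) auto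
  define ws where "ws = gram_schmidt n bs"
  have ws: "corthogonal ws" "set ws \<subseteq> carrier_vec n" "length ws = n"
    using gram_schmidt_result[OF bs(1-3) ws_def] bs(4) by auto
  have "ws ! 0 = v"
    using gram_schmidt_hd[OF v(1), of rest] ws(3) \<open>n \<noteq> 0\<close>
    unfolding ws_def bs_eq by (metis hd_conv_nth list.size(3))
  then have "col (mat_of_cols n (map normalize_vec ws)) 0 = normalize_vec v"
    using ws \<open>n \<noteq> 0\<close> v(1) by (subst col_mat_of_cols) auto
  then show ?thesis
    using that[OF unitary_mat_of_corthogonal[OF ws]] by (simp add: normalize_vec_def)
qed

section \<open>Diagonal matrices and the spectral theorem for Hermitian matrices\<close>

definition mk_diag :: "nat \<Rightarrow> (nat \<Rightarrow> 'a::zero) \<Rightarrow> 'a mat" where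
  "mk_diag n a = mat n n (\<lambda>(i, j). if i = j then a i else 0)"

lemma mk_diag_carrier [simp]: "mk_diag n a \<in> carrier_mat n n"
  and dim_row_mk_diag [simp]: "dim_row (mk_diag n a) = n"
  and dim_col_mk_diag [simp]: "dim_col (mk_diag n a) = n"
  by (simp_all add: mk_diag_def)

lemma index_mk_diag [simp]: "i < n \<Longrightarrow> j < n \<Longrightarrow> mk_diag n a $$ (i, j) = (if i = j then a i else 0)"
  by (simp add: mk_diag_def)

lemma mk_diag_mult_index:
  assumes "R \<in> carrier_mat n m" "i < n" "j < m"
  shows "(mk_diag n a * R) $$ (i, j) = a i * R $$ (i, j)"
proof -
  have "(mk_diag n a * R) $$ (i, j) = (\<Sum>l<n. (if i = l then a i else 0) * R $$ (l, j))"
    using assms by (simp add: scalar_prod_def atLeast0LessThan)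
  also have "\<dots> = (\<Sum>l<n. if l = i then a i * R $$ (i, j) else 0)"
    by (rule sum.cong) auto
  finally show ?thesis using assms by simp
qed

lemma mult_mk_diag_index:
  assumes "R \<in> carrier_mat m n" "i < m" "j < n"
  shows "(R * mk_diag n a) $$ (i, j) = R $$ (i, j) * a j"
proof -
  have "(R * mk_diag n a) $$ (i, j) = (\<Sum>l<n. R $$ (i, l) * (if l = j then a l else 0))"
    using assms by (simp add: scalar_prod_def atLeast0LessThan)
  also have "\<dots> = (\<Sum>l<n. if l = j then R $$ (i, j) * a j else 0)"
    by (rule sum.cong) auto
  finally show ?thesis using assms by simp
qed

lemma mk_diag_mult_vec:
  assumes "y \<in> carrier_vec n"
  shows "mk_diag n a *\<^sub>v y = vec n (\<lambda>k. a k * y $ k)"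
proof (rule eq_vecI)
  fix k assume "k < dim_vec (vec n (\<lambda>k. a k * y $ k))"
  then have k: "k < n" by simp
  have "(mk_diag n a *\<^sub>v y) $ k = (\<Sum>l<n. (if k = l then a k else 0) * y $ l)"
    using assms k by (simp add: scalar_prod_def atLeast0LessThan)
  also have "\<dots> = (\<Sum>l<n. if l = k then a k * y $ k else 0)"
    by (rule sum.cong) auto
  finally show "(mk_diag n a *\<^sub>v y) $ k = vec n (\<lambda>k. a k * y $ k) $ k" using k by simp
qed simp

lemma mtrace_mk_diag_mult:
  assumes "R \<in> carrier_mat n n"
  shows "mtrace (mk_diag n a * R) = (\<Sum>k<n. a k * R $$ (k, k))"
proof -
  have "mtrace (mk_diag n a * R) = (\<Sum>k<n. (mk_diag n a * R) $$ (k, k))"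
    by (simp add: mtrace_def)
  also have "\<dots> = (\<Sum>k<n. a k * R $$ (k, k))"
    by (intro sum.cong refl mk_diag_mult_index[OF assms]) auto
  finally show ?thesis .
qed

lemma mult_eq_mult_mk_diag_iff:
  fixes A :: "'a :: comm_semiring_0 mat"
  assumes A: "A \<in> carrier_mat n n" and U: "U \<in> carrier_mat n n"
  shows "A * U = U * mk_diag n a \<longleftrightarrow> (\<forall>j<n. A *\<^sub>v col U j = a j \<cdot>\<^sub>v col U j)"
proof -
  have "(A * U) $$ (i, j) = (A *\<^sub>v col U j) $ i"
    and "(U * mk_diag n a) $$ (i, j) = (a j \<cdot>\<^sub>v col U j) $ i" if "i < n" "j < n" for i j
    using A U that mult_mk_diag_index[OF U that] by (simp_all add: mult.commute)
  then show ?thesis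
    using A U by (auto simp: mat_eq_iff vec_eq_iff)
qed

lemma eigenvalue_similar_mk_diag_iff:
  fixes A :: "'a :: field mat"
  assumes "A \<in> carrier_mat n n" "similar_mat A (mk_diag n a)"
  shows "eigenvalue A \<mu> \<longleftrightarrow> (\<exists>k<n. a k = \<mu>)"
proof -
  have "char_poly A = char_poly (mk_diag n a)" by (rule char_poly_similar[OF assms(2)])
  also have "\<dots> = (\<Prod>x\<leftarrow>diag_mat (mk_diag n a). [:- x, 1:])"
    by (rule char_poly_upper_triangular) (auto simp: upper_triangular_def)
  also have "diag_mat (mk_diag n a) = map a [0..<n]"
    unfolding diag_mat_def by (intro map_cong) auto
  finally have "char_poly A = (\<Prod>x\<leftarrow>map a [0..<n]. [:- x, 1:])" .
  then show ?thesis
    unfolding eigenvalue_root_char_poly[OF assms(1)]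
    by (auto simp: poly_prod_list prod_list_zero_iff)
qed

lemma similar_mat_unitary:
  assumes U: "unitary_mat n U" and "A \<in> carrier_mat n n" "B \<in> carrier_mat n n"
    and AU: "A * U = U * B"
  shows "similar_mat A B"
proof -
  note U' = unitary_matD[OF U]
  have "A = A * (U * adj U)" using U' assms(2) by simp
  also have "\<dots> = U * B * adj U"
    using U' assms(2,3) AU by (metis adj_carrier_mat assoc_mult_mat)
  finally show ?thesis
    using U' assms(2,3) by (intro similar_matI[of A B U "adj U" n]) (auto simp: assoc_mult_mat[of _ n n _ n _ n])
qed

context
  fixes n :: nat and W :: "complex mat"
  assumes W: "unitary_mat n W"
begin

lemmas sq_assoc = assoc_mult_mat[of _ n n _ n _ n] and sq_closed = mult_carrier_mat[of _ n n _ n]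

lemma unitary_conj_carrier: "M \<in> carrier_mat n n \<Longrightarrow> adj W * M * W \<in> carrier_mat n n"
  using unitary_matD(1,2)[OF W] by (simp add: sq_closed)

lemma adj_unitary_cancel_left: "M \<in> carrier_mat n n \<Longrightarrow> adj W * (W * M) = M"
proof -
  assume M: "M \<in> carrier_mat n n"
  have "adj W * (W * M) = adj W * W * M"
    using unitary_matD(2,1)[OF W] M by (rule assoc_mult_mat[symmetric])
  then show ?thesis using M by (simp add: unitary_matD(3,4)[OF W])
qed

lemma unitary_adj_cancel_left: "M \<in> carrier_mat n n \<Longrightarrow> W * (adj W * M) = M"
proof -
  assume M: "M \<in> carrier_mat n n"
  have "W * (adj W * M) = W * adj W * M"
    using unitary_matD(1,2)[OF W] M by (rule assoc_mult_mat[symmetric])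
  then show ?thesis using M by (simp add: unitary_matD(3,4)[OF W])
qed

lemma adj_unitary_cancel_right: "M \<in> carrier_mat n n \<Longrightarrow> M * adj W * W = M"
proof -
  assume M: "M \<in> carrier_mat n n"
  have "M * adj W * W = M * (adj W * W)"
    using M unitary_matD(2,1)[OF W] by (rule assoc_mult_mat)
  then show ?thesis using M by (simp add: unitary_matD(3,4)[OF W])
qed

lemma unitary_adj_cancel_right: "M \<in> carrier_mat n n \<Longrightarrow> M * W * adj W = M"
proof -
  assume M: "M \<in> carrier_mat n n"
  have "M * W * adj W = M * (W * adj W)"
    using M unitary_matD(1,2)[OF W] by (rule assoc_mult_mat)
  then show ?thesis using M by (simp add: unitary_matD(3,4)[OF W])
qed

lemma unitary_conj_of_conj: "M \<in> carrier_mat n n \<Longrightarrow> adj W * (W * M * adj W) * W = M"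
proof -
  assume M: "M \<in> carrier_mat n n"
  then have WM: "W * M \<in> carrier_mat n n" using unitary_matD(1,2)[OF W] by simp
  have "adj W * (W * M * adj W) * W = adj W * (W * M * adj W * W)"
    using unitary_matD(1,2)[OF W] WM by (intro assoc_mult_mat) auto
  also have "W * M * adj W * W = W * M" using WM by (rule adj_unitary_cancel_right)
  finally show ?thesis using M by (simp add: adj_unitary_cancel_left)
qed

lemma unitary_mult_conj:
  assumes "A \<in> carrier_mat n n"
  shows "A * W = W * (adj W * A * W)"
proof -
  have "W * (adj W * A * W) = W * (adj W * (A * W))"
    using assms unitary_matD(1,2)[OF W] by (simp add: sq_assoc)
  then show ?thesis using assms unitary_matD(1)[OF W] by (simp add: unitary_adj_cancel_left)
qed

lemma mtrace_unitary_conj: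
  assumes "\<rho> \<in> carrier_mat n n"
  shows "mtrace (adj W * \<rho> * W) = mtrace \<rho>"
proof -
  have "mtrace (adj W * \<rho> * W) = mtrace (W * (adj W * \<rho>))"
    using assms unitary_matD(1,2)[OF W] by (intro mtrace_mult_comm) auto
  also have "W * (adj W * \<rho>) = W * adj W * \<rho>"
    using unitary_matD(1,2)[OF W] assms by (rule assoc_mult_mat[symmetric])
  also have "\<dots> = \<rho>" using assms by (simp add: unitary_matD(3,4)[OF W])
  finally show ?thesis .
qed

lemma mtrace_mult_unitary_conj:
  assumes X: "X \<in> carrier_mat n n" and K: "K \<in> carrier_mat n n" and XW: "X * W = W * K"
    and \<rho>: "\<rho> \<in> carrier_mat n n"
  shows "mtrace (X * \<rho>) = mtrace (K * (adj W * \<rho> * W))"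
proof -
  have "X = W * K * adj W"
    using unitary_adj_cancel_right[OF X] XW by simp
  then have "mtrace (X * \<rho>) = mtrace (adj W * (X * \<rho>) * W)"
    using X \<rho> unitary_matD(1,2)[OF W] by (simp add: mtrace_unitary_conj sq_closed)
  also have "adj W * (X * \<rho>) * W = K * (adj W * \<rho> * W)"
    using \<open>X = W * K * adj W\<close> X K \<rho> unitary_matD(1,2)[OF W]
    by (simp add: sq_assoc sq_closed adj_unitary_cancel_left)
  finally show ?thesis .
qed

lemma index_unitary_conj_diag:
  assumes \<rho>: "\<rho> \<in> carrier_mat n n" and k: "k < n"
  shows "(adj W * \<rho> * W) $$ (k, k) = (\<rho> *\<^sub>v col W k) \<bullet>c col W k"
proof -
  have "(adj W * \<rho> * W) $$ (k, k) = (adj W * (\<rho> * W)) $$ (k, k)"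
    using unitary_matD(1,2)[OF W] \<rho> by (simp add: sq_assoc)
  also have "\<dots> = row (adj W) k \<bullet> (\<rho> *\<^sub>v col W k)"
    using unitary_matD(1,2)[OF W] \<rho> k col_mult2[OF \<rho> unitary_matD(1)[OF W] k] by simp
  also have "\<dots> = (\<rho> *\<^sub>v col W k) \<bullet>c col W k"
    using unitary_matD(1,2)[OF W] \<rho> k by (auto simp: scalar_prod_def mult.commute intro!: sum.cong)
  finally show ?thesis .
qed

lemma density_op_unitary_conj_mk_diag:
  assumes d0: "\<And>k. k < n \<Longrightarrow> 0 \<le> d k" and d1: "(\<Sum>k<n. d k) = 1"
  defines "\<rho> \<equiv> W * mk_diag n (\<lambda>k. complex_of_real (d k)) * adj W"
  shows "density_op n \<rho>"
proof -
  define G where "G = mk_diag n (\<lambda>k. complex_of_real (d k))"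
  have G: "G \<in> carrier_mat n n" "adj G = G" by (auto simp: G_def intro!: eq_matI)
  have \<rho>: "\<rho> \<in> carrier_mat n n" unfolding \<rho>_def G_def[symmetric] using G unitary_matD(1,2)[OF W] by (simp add: sq_closed)
  have "adj \<rho> = \<rho>"
    unfolding \<rho>_def G_def[symmetric] using G unitary_matD(1,2)[OF W]
    by (simp add: adj_mult[of _ n n _ n] sq_assoc sq_closed)
  moreover have "0 \<le> Re ((\<rho> *\<^sub>v v) \<bullet>c v)" if v: "v \<in> carrier_vec n" for v
  proof -
    define y where "y = adj W *\<^sub>v v"
    have y: "y \<in> carrier_vec n" using mult_mat_vec_carrier[OF unitary_matD(2)[OF W] v] by (simp add: y_def)
    have "(\<rho> *\<^sub>v v) \<bullet>c v = (W *\<^sub>v (G *\<^sub>v y)) \<bullet>c v"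
      unfolding \<rho>_def G_def[symmetric] using G unitary_matD(1,2)[OF W] v y
        assoc_mult_mat_vec[of "W * G" n n "adj W" n v] assoc_mult_mat_vec[of W n n G n y]
      by (simp add: sq_closed flip: y_def)
    also have "\<dots> = (G *\<^sub>v y) \<bullet>c y"
      unfolding y_def using cscalar_prod_adj[of W n n "G *\<^sub>v y" v] G unitary_matD(1,2)[OF W] y v by (simp add: y_def)
    also have "\<dots> = (\<Sum>k<n. complex_of_real (d k) * (y $ k * cnj (y $ k)))"
      using y by (simp add: G_def mk_diag_mult_vec scalar_prod_def atLeast0LessThan mult.assoc)
    finally have "Re ((\<rho> *\<^sub>v v) \<bullet>c v) = (\<Sum>k<n. d k * ((Re (y $ k))\<^sup>2 + (Im (y $ k))\<^sup>2))"
      by (simp add: complex_mult_cnj)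
    also have "\<dots> \<ge> 0" using d0 by (intro sum_nonneg) simp
    finally show ?thesis .
  qed
  moreover have "mtrace \<rho> = 1"
  proof -
    have "mtrace \<rho> = mtrace G"
      using mtrace_unitary_conj[OF \<rho>] unitary_conj_of_conj[OF G(1)] unfolding \<rho>_def G_def by simp
    also have "\<dots> = 1" using d1 by (simp add: G_def mtrace_def flip: of_real_sum)
    finally show ?thesis .
  qed
  ultimately show ?thesis using \<rho> unfolding density_op_def psd_def hermitian_mat_def by auto
qed

end

definition diag_block :: "'a::zero \<Rightarrow> 'a mat \<Rightarrow> 'a mat" where
  "diag_block c X = four_block_mat (mat 1 1 (\<lambda>_. c)) (0\<^sub>m 1 (dim_col X)) (0\<^sub>m (dim_row X) 1) X"

lemma diag_block_carrier [simp]: "X \<in> carrier_mat n m \<Longrightarrow> diag_block c X \<in> carrier_mat (Suc n) (Suc m)"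
  unfolding diag_block_def by (metis four_block_carrier_mat mat_carrier plus_1_eq_Suc carrier_matD)

lemma diag_block_mult:
  fixes X :: "'a :: semiring_1 mat"
  assumes "X \<in> carrier_mat n m" "Y \<in> carrier_mat m k"
  shows "diag_block a X * diag_block b Y = diag_block (a * b) (X * Y)"
  using assms unfolding diag_block_def
  by (subst mult_four_block_mat[of _ 1 1 _ m _ n _ _ 1 _ k]) (auto intro!: cong_four_block_mat eq_matI simp: scalar_prod_def)

lemma adj_diag_block: "adj (diag_block c X) = diag_block (cnj c) (adj X)"
  unfolding diag_block_def by (rule eq_matI) auto

lemma diag_block_one_mat [simp]: "diag_block 1 (1\<^sub>m n) = 1\<^sub>m (Suc n)"
  unfolding diag_block_def by (rule eq_matI) auto

lemma diag_block_mk_diag: "diag_block c (mk_diag n a) = mk_diag (Suc n) (case_nat c a)"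
  unfolding diag_block_def by (rule eq_matI) (auto split: nat.split)

lemma unitary_diag_block:
  assumes "unitary_mat n V"
  shows "unitary_mat (Suc n) (diag_block 1 V)"
proof (rule unitary_matI)
  note V = unitary_matD[OF assms]
  show "diag_block 1 V \<in> carrier_mat (Suc n) (Suc n)" using V by simp
  show "adj (diag_block 1 V) * diag_block 1 V = 1\<^sub>m (Suc n)"
    using diag_block_mult[OF adj_carrier_mat[OF V(1)] V(1), of 1 1] V by (simp add: adj_diag_block)
qed

lemma diag_block_eigenbasis:
  fixes A :: "'a :: semiring_1 mat"
  assumes A: "A \<in> carrier_mat m m" and V: "V \<in> carrier_mat m m" and AV: "A * V = V * mk_diag m a"
  shows "diag_block c A * diag_block 1 V = diag_block 1 V * mk_diag (Suc m) (case_nat c a)"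
proof -
  have "diag_block c A * diag_block 1 V = diag_block c (V * mk_diag m a)"
    using diag_block_mult[OF A V] AV by simp
  also have "\<dots> = diag_block 1 V * diag_block c (mk_diag m a)"
    using diag_block_mult[OF V mk_diag_carrier] by simp
  finally show ?thesis by (simp add: diag_block_mk_diag)
qed

lemma hermitian_mat_adj_mult_mult:
  assumes A: "A \<in> carrier_mat n n" "hermitian_mat A" and W: "W \<in> carrier_mat n k"
  shows "hermitian_mat (adj W * A * W)"
proof -
  have AW: "adj W * A \<in> carrier_mat k n" using A W by (intro mult_carrier_mat) auto
  have "adj (adj W * A * W) = adj W * (adj A * adj (adj W))"
    using adj_mult[OF AW W(1)] adj_mult[OF adj_carrier_mat[OF W] A(1)] by simp
  also have "\<dots> = adj W * A * W"
    using A W unfolding hermitian_mat_def by (metis adj_adj adj_carrier_mat assoc_mult_mat)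
  finally show ?thesis using AW W by (simp add: hermitian_mat_def square_mat.simps)
qed

lemma unitary_conj_eigenvector_col:
  assumes W: "unitary_mat n W" and A: "A \<in> carrier_mat n n" and "0 < n"
    and eig: "A *\<^sub>v col W 0 = \<mu> \<cdot>\<^sub>v col W 0" and i: "i < n"
  shows "(adj W * A * W) $$ (i, 0) = (if i = 0 then \<mu> else 0)"
proof -
  note W' = unitary_matD[OF W]
  have "col (adj W * A * W) 0 = (adj W * A) *\<^sub>v col W 0"
    using W' A \<open>0 < n\<close> by (intro col_mult2) auto
  also have "\<dots> = adj W *\<^sub>v (A *\<^sub>v col W 0)"
    using W' A by (intro assoc_mult_mat_vec) auto
  also have "\<dots> = \<mu> \<cdot>\<^sub>v (adj W *\<^sub>v col W 0)"
    using W' mult_mat_vec[OF adj_carrier_mat[OF W'(1)], of "col W 0" \<mu>] by (simp add: eig carrier_vecI)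
  also have "adj W *\<^sub>v col W 0 = col (adj W * W) 0"
    using W' \<open>0 < n\<close> by (intro col_mult2[symmetric]) auto
  finally have "col (adj W * A * W) 0 $ i = (\<mu> \<cdot>\<^sub>v unit_vec n 0) $ i"
    using W' \<open>0 < n\<close> by simp
  moreover have "(adj W * A * W) $$ (i, 0) = col (adj W * A * W) 0 $ i"
    using W' A i by simp
  ultimately show ?thesis using i \<open>0 < n\<close> by simp
qed

lemma hermitian_first_col_diag_block:
  fixes M :: "complex mat" and m :: nat
  defines "M' \<equiv> mat m m (\<lambda>(i, j). M $$ (Suc i, Suc j))"
  assumes M: "M \<in> carrier_mat (Suc m) (Suc m)" "hermitian_mat M"
    and col0: "\<And>i. i < Suc m \<Longrightarrow> M $$ (i, 0) = (if i = 0 then \<mu> else 0)"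
  shows "M = diag_block (complex_of_real (Re \<mu>)) M'" and "hermitian_mat M'"
proof -
  have herm: "M $$ (i, j) = cnj (M $$ (j, i))" if "i < Suc m" "j < Suc m" for i j
    using M that index_adj[of i M j] unfolding hermitian_mat_def by (metis carrier_matD)
  have "\<mu> = cnj \<mu>" using herm[of 0 0] col0[of 0] by simp
  then have real: "\<mu> = complex_of_real (Re \<mu>)" by (metis Reals_cnj_iff complex_is_Real_iff of_real_Re)
  show "M = diag_block (complex_of_real (Re \<mu>)) M'"
  proof (rule eq_matI)
    fix i j assume ij: "i < dim_row (diag_block (complex_of_real (Re \<mu>)) M')"
      "j < dim_col (diag_block (complex_of_real (Re \<mu>)) M')"
    then show "M $$ (i, j) = diag_block (complex_of_real (Re \<mu>)) M' $$ (i, j)"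
      using col0 herm[of 0 j] col0[of j] real
      by (auto simp: diag_block_def M'_def)
  qed (use M in \<open>auto simp: diag_block_def M'_def\<close>)
  have "adj M' = M'"
  proof (rule eq_matI)
    fix i j assume "i < dim_row M'" "j < dim_col M'"
    then show "adj M' $$ (i, j) = M' $$ (i, j)" using herm[of "Suc i" "Suc j"] by (simp add: M'_def)
  qed (simp_all add: M'_def)
  then show "hermitian_mat M'"
    unfolding hermitian_mat_def by (simp add: M'_def)
qed

lemma hermitian_deflation:
  assumes A: "A \<in> carrier_mat (Suc m) (Suc m)" "hermitian_mat A"
  obtains W e A' where "unitary_mat (Suc m) W" "hermitian_mat A'" "A' \<in> carrier_mat m m"
    "adj W * A * W = diag_block (complex_of_real e) A'"
proof -
  obtain \<mu> where "eigenvalue A \<mu>" using spectrum_non_empty[OF A(1)] unfolding spectrum_def by auto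
  then obtain v where "eigenvector A v \<mu>" unfolding eigenvalue_def by blast
  then have v: "v \<in> carrier_vec (Suc m)" "v \<noteq> 0\<^sub>v (Suc m)" "A *\<^sub>v v = \<mu> \<cdot>\<^sub>v v"
    using A unfolding eigenvector_def by auto
  obtain W c where W: "unitary_mat (Suc m) W" "col W 0 = c \<cdot>\<^sub>v v"
    using unitary_completion[OF v(1,2)] .
  have eig: "A *\<^sub>v col W 0 = \<mu> \<cdot>\<^sub>v col W 0"
    using W(2) v A by (simp add: mult_mat_vec[of _ "Suc m" "Suc m"] smult_smult_assoc mult.commute)
  note W_carrier = unitary_matD(1)[OF W(1)]
  have "adj W * A * W \<in> carrier_mat (Suc m) (Suc m)" "hermitian_mat (adj W * A * W)"
    using A W_carrier hermitian_mat_adj_mult_mult[OF A W_carrier] by auto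
  from hermitian_first_col_diag_block[OF this unitary_conj_eigenvector_col[OF W(1) A(1) _ eig]]
  show ?thesis by (intro that[OF W(1)]) auto
qed

theorem hermitian_unitary_diagonalization:
  assumes "A \<in> carrier_mat n n" "hermitian_mat A"
  shows "\<exists>U d. unitary_mat n U \<and> A * U = U * mk_diag n (\<lambda>k. complex_of_real (d k))"
  using assms
proof (induction n arbitrary: A)
  case 0
  have "unitary_mat 0 (1\<^sub>m 0)" by (simp add: unitary_mat_def)
  moreover have "A * 1\<^sub>m 0 = 1\<^sub>m 0 * mk_diag 0 (\<lambda>k. complex_of_real 0)" using 0 by (intro eq_matI) auto
  ultimately show ?case by (intro exI conjI)
next
  case (Suc m)
  obtain W e A' where W: "unitary_mat (Suc m) W" and A': "hermitian_mat A'" "A' \<in> carrier_mat m m"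
    and M: "adj W * A * W = diag_block (complex_of_real e) A'"
    using hermitian_deflation[OF Suc.prems] .
  obtain V d where V: "unitary_mat m V" "A' * V = V * mk_diag m (\<lambda>k. complex_of_real (d k))"
    using Suc.IH[OF A'(2,1)] by blast
  define B where "B = diag_block 1 V"
  define D where "D = mk_diag (Suc m) (\<lambda>k. complex_of_real (case_nat e d k))"
  have W': "W \<in> carrier_mat (Suc m) (Suc m)" using unitary_matD[OF W] by simp
  have B: "B \<in> carrier_mat (Suc m) (Suc m)" using unitary_matD[OF V(1)] by (simp add: B_def)
  have E: "diag_block (complex_of_real e) A' \<in> carrier_mat (Suc m) (Suc m)" using A'(2) by simp
  have "diag_block (complex_of_real e) A' * B = B * D"
    using diag_block_eigenbasis[OF A'(2) unitary_matD(1)[OF V(1)] V(2)]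
    by (simp add: B_def D_def) (metis nat.case_distrib)
  have "A * (W * B) = A * W * B"
    using Suc.prems(1) W' B by (rule assoc_mult_mat[symmetric])
  also have "\<dots> = W * diag_block (complex_of_real e) A' * B"
    using unitary_mult_conj[OF W Suc.prems(1)] M by simp
  also have "\<dots> = W * (B * D)"
    using W' E B \<open>diag_block (complex_of_real e) A' * B = B * D\<close> by simp
  also have "\<dots> = W * B * D"
    unfolding D_def using W' B mk_diag_carrier by (rule assoc_mult_mat[symmetric])
  finally show ?case
    using unitary_mat_mult[OF W unitary_diag_block[OF V(1)]] unfolding B_def D_def by blast
qed

section \<open>Kronecker products and the swap operator\<close>

lemma div_mod_less_mult:
  fixes i :: nat assumes "i < a * c" shows "i div c < a" "i mod c < c"
proof -
  have "0 < c" using assms by (cases c) auto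
  then show "i div c < a" "i mod c < c" using assms by (simp_all add: div_less_iff_less_mult)
qed

lemma pair_index_less: "i < m \<Longrightarrow> j < n \<Longrightarrow> i * n + j < m * (n :: nat)"
proof -
  assume "i < m" "j < n"
  then have "i * n + j < Suc i * n" by simp
  also have "\<dots> \<le> m * n" using \<open>i < m\<close> by (intro mult_right_mono) auto
  finally show ?thesis .
qed

lemma sum_lessThan_mult_nat: "(\<Sum>k<m * n. f k) = (\<Sum>i<m. \<Sum>j<n. f (i * n + j :: nat))"
proof -
  have "(\<Sum>k<m * n. f k) = (\<Sum>(i, j)\<in>{..<m} \<times> {..<n}. f (i * n + j))"
    by (rule sum.reindex_bij_witness[where i = "\<lambda>(i, j). i * n + j" and j = "\<lambda>k. (k div n, k mod n)"])
      (auto simp: pair_index_less div_mod_less_mult)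
  then show ?thesis by (simp add: sum.cartesian_product)
qed

lemma dim_row_kron [simp]: "dim_row (kron A B) = dim_row A * dim_row B"
  and dim_col_kron [simp]: "dim_col (kron A B) = dim_col A * dim_col B"
  by (simp_all add: kron_def)

lemma kron_carrier_mat [simp]:
  "A \<in> carrier_mat a b \<Longrightarrow> B \<in> carrier_mat c d \<Longrightarrow> kron A B \<in> carrier_mat (a * c) (b * d)"
  by (intro carrier_matI) auto

lemma index_kron [simp]:
  "i < dim_row A * dim_row B \<Longrightarrow> j < dim_col A * dim_col B \<Longrightarrow>
    kron A B $$ (i, j) = A $$ (i div dim_row B, j div dim_col B) * B $$ (i mod dim_row B, j mod dim_col B)"
  by (simp add: kron_def)

lemma kron_mult:
  assumes A: "A \<in> carrier_mat a b" and B: "B \<in> carrier_mat c d"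
    and C: "C \<in> carrier_mat b e" and E: "E \<in> carrier_mat d f"
  shows "kron A B * kron C E = kron (A * C) (B * E)"
proof (rule eq_matI)
  fix i j assume "i < dim_row (kron (A * C) (B * E))" "j < dim_col (kron (A * C) (B * E))"
  then have i: "i < a * c" and j: "j < e * f" using A B C E by auto
  note bounds = div_mod_less_mult[OF i] div_mod_less_mult[OF j]
  have "(kron A B * kron C E) $$ (i, j) = (\<Sum>k<b * d. A $$ (i div c, k div d) * B $$ (i mod c, k mod d) *
      (C $$ (k div d, j div f) * E $$ (k mod d, j mod f)))"
    using A B C E i j by (auto simp: scalar_prod_def atLeast0LessThan div_mod_less_mult intro!: sum.cong)
  also have "\<dots> = (\<Sum>k<b. A $$ (i div c, k) * C $$ (k, j div f)) * (\<Sum>l<d. B $$ (i mod c, l) * E $$ (l, j mod f))"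
    by (simp add: sum_lessThan_mult_nat sum_product mult_ac)
  also have "\<dots> = kron (A * C) (B * E) $$ (i, j)"
    using A B C E i j bounds by (simp add: scalar_prod_def atLeast0LessThan)
  finally show "(kron A B * kron C E) $$ (i, j) = kron (A * C) (B * E) $$ (i, j)" .
qed (use A B C E in auto)

lemma adj_kron: "adj (kron A B) = kron (adj A) (adj B)"
  by (rule eq_matI) (auto simp: div_mod_less_mult)

lemma kron_mk_diag: "kron (mk_diag m a) (mk_diag n b) = mk_diag (m * n) (\<lambda>k. a (k div n) * b (k mod n))"
proof (rule eq_matI)
  fix i j assume "i < dim_row (mk_diag (m * n) (\<lambda>k. a (k div n) * b (k mod n)))"
    "j < dim_col (mk_diag (m * n) (\<lambda>k. a (k div n) * b (k mod n)))"
  then have ij: "i < m * n" "j < m * n" by auto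
  have "(i div n = j div n \<and> i mod n = j mod n) = (i = j)" by (metis div_mult_mod_eq)
  then show "kron (mk_diag m a) (mk_diag n b) $$ (i, j) = mk_diag (m * n) (\<lambda>k. a (k div n) * b (k mod n)) $$ (i, j)"
    using ij div_mod_less_mult[OF ij(1)] div_mod_less_mult[OF ij(2)] by auto
qed auto

lemma one_mat_eq_mk_diag: "1\<^sub>m n = mk_diag n (\<lambda>_. 1)"
  by (rule eq_matI) auto

lemma unitary_kron:
  assumes "unitary_mat m U" "unitary_mat n V"
  shows "unitary_mat (m * n) (kron U V)"
proof (rule unitary_matI)
  note U = unitary_matD[OF assms(1)] and V = unitary_matD[OF assms(2)]
  show "kron U V \<in> carrier_mat (m * n) (m * n)" using U V by simp
  show "adj (kron U V) * kron U V = 1\<^sub>m (m * n)"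
    using U V by (simp add: adj_kron kron_mult[of _ m m _ n n] one_mat_eq_mk_diag kron_mk_diag)
qed

(* Index i * D + j stands for e_i (x) e_j, as in kron; swap_idx exchanges the two factors. *)
definition swap_idx :: "nat \<Rightarrow> nat \<Rightarrow> nat" where
  "swap_idx D k = (k mod D) * D + k div D"

lemma swap_idx_pair: "j < D \<Longrightarrow> swap_idx D (i * D + j) = j * D + i"
  by (simp add: swap_idx_def)

lemma swap_idx_div: "k < D * D \<Longrightarrow> swap_idx D k div D = k mod D"
  and swap_idx_mod: "k < D * D \<Longrightarrow> swap_idx D k mod D = k div D"
  using div_mod_less_mult[of k D D] by (simp_all add: swap_idx_def)

lemma swap_idx_swap_idx: "k < D * D \<Longrightarrow> swap_idx D (swap_idx D k) = k"
  by (simp add: swap_idx_def[of D "swap_idx D k"] swap_idx_div swap_idx_mod)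

lemma swap_idx_less: "k < D * D \<Longrightarrow> swap_idx D k < D * D"
  using div_mod_less_mult[of k D D] pair_index_less[of "k mod D" D "k div D" D]
  by (simp add: swap_idx_def)

lemma swap_idx_eq_iff: "i < D * D \<Longrightarrow> j < D * D \<Longrightarrow> swap_idx D i = j \<longleftrightarrow> i = swap_idx D j"
  by (metis swap_idx_swap_idx)

lemma dim_row_swap_op [simp]: "dim_row (swap_op D) = D * D"
  and dim_col_swap_op [simp]: "dim_col (swap_op D) = D * D"
  by (simp_all add: swap_op_def)

lemma swap_op_carrier [simp]: "swap_op D \<in> carrier_mat (D * D) (D * D)"
  by (intro carrier_matI) simp_all

lemma index_swap_op:
  "i < D * D \<Longrightarrow> j < D * D \<Longrightarrow> swap_op D $$ (i, j) = of_bool (j = swap_idx D i)"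
  by (simp add: swap_op_def swap_idx_def)

lemma swap_op_mult_index:
  assumes "M \<in> carrier_mat (D * D) n" "i < D * D" "j < n"
  shows "(swap_op D * M) $$ (i, j) = M $$ (swap_idx D i, j)"
proof -
  have "(swap_op D * M) $$ (i, j) = (\<Sum>l<D * D. if l = swap_idx D i then M $$ (swap_idx D i, j) else 0)"
    using assms by (auto simp: scalar_prod_def atLeast0LessThan index_swap_op intro!: sum.cong)
  then show ?thesis using assms swap_idx_less by simp
qed

lemma mult_swap_op_index:
  assumes "M \<in> carrier_mat n (D * D)" "i < n" "j < D * D"
  shows "(M * swap_op D) $$ (i, j) = M $$ (i, swap_idx D j)"
proof -
  have "(M * swap_op D) $$ (i, j) = (\<Sum>l<D * D. M $$ (i, l) * of_bool (j = swap_idx D l))"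
    using assms by (simp add: scalar_prod_def atLeast0LessThan index_swap_op)
  also have "\<dots> = (\<Sum>l<D * D. if l = swap_idx D j then M $$ (i, swap_idx D j) else 0)"
    using assms(3) by (intro sum.cong) (auto simp: swap_idx_eq_iff swap_idx_swap_idx)
  finally show ?thesis using assms swap_idx_less by simp
qed

lemma swap_op_conj_index:
  assumes "M \<in> carrier_mat (D * D) (D * D)" "i < D * D" "j < D * D"
  shows "(swap_op D * M * swap_op D) $$ (i, j) = M $$ (swap_idx D i, swap_idx D j)"
proof -
  have "(swap_op D * M * swap_op D) $$ (i, j) = (swap_op D * M) $$ (i, swap_idx D j)"
    by (rule mult_swap_op_index) (use assms in auto)
  also have "\<dots> = M $$ (swap_idx D i, swap_idx D j)"
    by (rule swap_op_mult_index) (use assms swap_idx_less in auto)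
  finally show ?thesis .
qed

lemma adj_swap_op [simp]: "adj (swap_op D) = swap_op D"
  by (rule eq_matI) (auto simp: index_swap_op swap_idx_eq_iff swap_idx_less swap_idx_swap_idx)

lemma swap_op_mult_swap_op: "swap_op D * swap_op D = 1\<^sub>m (D * D)"
proof (rule eq_matI)
  fix i j assume "i < dim_row (1\<^sub>m (D * D))" "j < dim_col (1\<^sub>m (D * D))"
  then have ij: "i < D * D" "j < D * D" by auto
  then show "(swap_op D * swap_op D) $$ (i, j) = 1\<^sub>m (D * D) $$ (i, j)"
    using swap_op_mult_index[OF swap_op_carrier ij] swap_idx_less[OF ij(1)]
    by (auto simp: index_swap_op swap_idx_swap_idx)
qed simp_all

lemma swap_op_conj_kron:
  assumes "A \<in> carrier_mat D D" "B \<in> carrier_mat D D"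
  shows "swap_op D * kron A B * swap_op D = kron B A"
proof (rule eq_matI)
  fix i j assume "i < dim_row (kron B A)" "j < dim_col (kron B A)"
  then have ij: "i < D * D" "j < D * D" using assms by auto
  then show "(swap_op D * kron A B * swap_op D) $$ (i, j) = kron B A $$ (i, j)"
    using assms ij swap_op_conj_index[of "kron A B" D i j] swap_idx_less
    by (simp add: swap_idx_div swap_idx_mod mult.commute)
qed (use assms in auto)

lemma swap_op_commute_kron_self:
  assumes "A \<in> carrier_mat D D"
  shows "swap_op D * kron A A = kron A A * swap_op D"
proof -
  have K: "kron A A \<in> carrier_mat (D * D) (D * D)" using assms by simp
  have "swap_op D * kron A A = swap_op D * kron A A * (swap_op D * swap_op D)"
    using right_mult_one_mat[OF mult_carrier_mat[OF swap_op_carrier K]] by (simp add: swap_op_mult_swap_op)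
  also have "\<dots> = (swap_op D * kron A A * swap_op D) * swap_op D"
    using K by (simp add: assoc_mult_mat[of _ "D * D" "D * D" _ "D * D" _ "D * D"]
        mult_carrier_mat[of _ "D * D" "D * D" _ "D * D"])
  finally show ?thesis using swap_op_conj_kron[OF assms assms] by simp
qed

lemma kron_mult_kron_eigenbasis:
  assumes U: "U \<in> carrier_mat D D" and A: "A \<in> carrier_mat D D" and B: "B \<in> carrier_mat D D"
    and AU: "A * U = U * mk_diag D a" and BU: "B * U = U * mk_diag D b"
  shows "kron A B * kron U U = kron U U * mk_diag (D * D) (\<lambda>k. a (k div D) * b (k mod D))"
proof -
  have "kron A B * kron U U = kron (U * mk_diag D a) (U * mk_diag D b)"
    using kron_mult[OF A B U U] AU BU by simp
  also have "\<dots> = kron U U * kron (mk_diag D a) (mk_diag D b)"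
    using kron_mult[OF U U mk_diag_carrier mk_diag_carrier] by simp
  finally show ?thesis by (simp add: kron_mk_diag)
qed

lemma swap_op_conj_commute:
  assumes U: "U \<in> carrier_mat (D * D) (D * D)" and V: "V \<in> carrier_mat (D * D) (D * D)"
    and M: "M \<in> carrier_mat (D * D) (D * D)"
    and SU: "swap_op D * U = U * swap_op D" and VS: "V * swap_op D = swap_op D * V"
  shows "swap_op D * (U * M * V) * swap_op D = U * (swap_op D * M * swap_op D) * V"
proof -
  note assoc = assoc_mult_mat[of _ "D * D" "D * D" _ "D * D" _ "D * D"]
    and closed = mult_carrier_mat[of _ "D * D" "D * D" _ "D * D"]
  have "swap_op D * (U * X) = U * (swap_op D * X)" if "X \<in> carrier_mat (D * D) (D * D)" for X
  proof -
    have "swap_op D * (U * X) = swap_op D * U * X" using that U by (simp add: assoc)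
    also have "\<dots> = U * (swap_op D * X)" using that U by (simp add: assoc SU)
    finally show ?thesis .
  qed
  then show ?thesis using U V M by (simp add: assoc closed VS)
qed

lemma swap_op_conj_mk_diag:
  assumes "\<And>k. k < D * D \<Longrightarrow> d (swap_idx D k) = d k"
  shows "swap_op D * mk_diag (D * D) d * swap_op D = mk_diag (D * D) d"
proof (rule eq_matI)
  fix i j assume "i < dim_row (mk_diag (D * D) d)" "j < dim_col (mk_diag (D * D) d)"
  then have ij: "i < D * D" "j < D * D" by auto
  then show "(swap_op D * mk_diag (D * D) d * swap_op D) $$ (i, j) = mk_diag (D * D) d $$ (i, j)"
    using swap_op_conj_index[OF mk_diag_carrier ij] swap_idx_less[OF ij(1)] swap_idx_less[OF ij(2)]
      assms[OF ij(1)] swap_idx_eq_iff[OF swap_idx_less[OF ij(1)] ij(2)] swap_idx_swap_idx[OF ij(1)]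
    by auto
qed simp_all

section \<open>The linear program over symmetric pair distributions\<close>

definition sym_pair_distr :: "nat \<Rightarrow> (nat \<Rightarrow> nat \<Rightarrow> real) \<Rightarrow> bool" where
  "sym_pair_distr n w \<longleftrightarrow>
     (\<forall>i<n. \<forall>j<n. 0 \<le> w i j \<and> w i j = w j i) \<and> (\<Sum>i<n. \<Sum>j<n. w i j) = 1"

(* w i j is the diagonal entry of a two-copy state at the product eigenvector u_i (x) u_j,
   see feasible_f_eq_pair_lp_values. *)
definition pair_lp_values :: "nat \<Rightarrow> (nat \<Rightarrow> real) \<Rightarrow> real \<Rightarrow> real set" where
  "pair_lp_values n lam \<delta> = {\<Sum>i<n. \<Sum>j<n. lam i * of_bool (lam j = 1) * w i j | w.
     sym_pair_distr n w \<and> \<delta> \<le> (\<Sum>i<n. \<Sum>j<n. lam i * w i j)}"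

lemma sum_sum_swap_sym:
  assumes "\<And>i j. i < n \<Longrightarrow> j < n \<Longrightarrow> w i j = w j i"
  shows "(\<Sum>i<n. \<Sum>j<n. f j i * w i j) = (\<Sum>i<n. \<Sum>j<n. f i j * (w i j :: real))"
  by (subst sum.swap) (simp add: assms)

lemma sym_pair_distr_linear_bound:
  fixes x g :: "nat \<Rightarrow> real"
  assumes w: "sym_pair_distr n w"
    and pt: "\<And>i j. i < n \<Longrightarrow> j < n \<Longrightarrow> a * (x i + x j) + 2 * b \<le> c * (x i * g j + x j * g i)"
  shows "a * (\<Sum>i<n. \<Sum>j<n. x i * w i j) + b \<le> c * (\<Sum>i<n. \<Sum>j<n. x i * g j * w i j)"
proof -
  have sym: "\<And>i j. i < n \<Longrightarrow> j < n \<Longrightarrow> w i j = w j i" and sum1: "(\<Sum>i<n. \<Sum>j<n. w i j) = 1"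
    using w unfolding sym_pair_distr_def by auto
  have "0 \<le> (\<Sum>i<n. \<Sum>j<n. w i j * (c * (x i * g j + x j * g i) - a * (x i + x j) - 2 * b))"
    using w pt unfolding sym_pair_distr_def by (intro sum_nonneg mult_nonneg_nonneg) (auto simp: algebra_simps)
  also have "\<dots> = c * (\<Sum>i<n. \<Sum>j<n. x i * g j * w i j) + c * (\<Sum>i<n. \<Sum>j<n. x j * g i * w i j)
      - a * (\<Sum>i<n. \<Sum>j<n. x i * w i j) - a * (\<Sum>i<n. \<Sum>j<n. x j * w i j) - 2 * b * (\<Sum>i<n. \<Sum>j<n. w i j)"
    by (simp add: sum_subtractf sum.distrib sum_distrib_left algebra_simps)
  also have "\<dots> = 2 * (c * (\<Sum>i<n. \<Sum>j<n. x i * g j * w i j) - a * (\<Sum>i<n. \<Sum>j<n. x i * w i j) - b)"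
    using sum_sum_swap_sym[where f = "\<lambda>i j. x i * g j", OF sym] sum_sum_swap_sym[where f = "\<lambda>i j. x i", OF sym] sum1
    by simp
  finally show ?thesis by simp
qed

(* For eigenvalues x, y of Omega the symmetrised product state of u_x and u_y has
   (p, f) = ((x + y)/2, s/2); the five inequalities are the lines supporting the lower boundary
   of the convex hull of these points. *)
lemma spectral_pair_bounds:
  fixes x y \<beta> \<tau> :: real
  defines "s \<equiv> x * of_bool (y = 1) + y * of_bool (x = 1)"
  assumes x: "x = 1 \<or> \<tau> \<le> x \<and> x \<le> \<beta>" and y: "y = 1 \<or> \<tau> \<le> y \<and> y \<le> \<beta>"
    and \<tau>: "0 \<le> \<tau>" "\<tau> \<le> \<beta>" and \<beta>: "\<beta> < 1"
  shows "0 \<le> s"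
    and "(2 - \<beta>) * (x + y) - 2 \<le> (1 - \<beta>) * s"
    and "1/2 \<le> \<beta> \<Longrightarrow> \<beta> * (x + y) - 2 * \<beta>\<^sup>2 \<le> (1 - \<beta>) * s"
    and "\<beta> < 1/2 \<Longrightarrow> \<tau> * (x + y) - 2 * (\<tau> * \<beta>) \<le> (1 + \<tau> - 2 * \<beta>) * s"
    and "\<beta> < 1/2 \<Longrightarrow> (x + y) - 1 \<le> s"
proof -
  have sq: "0 \<le> (1 - \<beta>)\<^sup>2" by simp
  consider (both) "x = 1" "y = 1" | (one) z where "{x, y} = {1, z}" "z \<noteq> 1" "\<tau> \<le> z" "z \<le> \<beta>"
    | (none) "x \<noteq> 1" "y \<noteq> 1" "\<tau> \<le> x" "x \<le> \<beta>" "\<tau> \<le> y" "y \<le> \<beta>"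
    using x y by (metis insert_commute)
  then have "0 \<le> s \<and> (2 - \<beta>) * (x + y) - 2 \<le> (1 - \<beta>) * s \<and>
    (1/2 \<le> \<beta> \<longrightarrow> \<beta> * (x + y) - 2 * \<beta>\<^sup>2 \<le> (1 - \<beta>) * s) \<and>
    (\<beta> < 1/2 \<longrightarrow> \<tau> * (x + y) - 2 * (\<tau> * \<beta>) \<le> (1 + \<tau> - 2 * \<beta>) * s \<and> (x + y) - 1 \<le> s)"
  proof cases
    case both
    have "0 \<le> \<beta> * \<tau>" using \<tau> by simp
    then show ?thesis using both sq \<tau> \<beta>
      by (intro conjI impI; simp add: s_def power2_eq_square algebra_simps; linarith)
  next
    case one
    then have "x + y = 1 + z" "s = z" by (auto simp: s_def doubleton_eq_iff)
    moreover have "1/2 \<le> \<beta> \<Longrightarrow> 0 \<le> (2 * \<beta> - 1) * (\<beta> - z)" "\<beta> < 1/2 \<Longrightarrow> 0 \<le> (1 - 2 * \<beta>) * (z - \<tau>)"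
      using one by simp_all
    ultimately show ?thesis using one \<tau> \<beta> by (auto simp: power2_eq_square algebra_simps)
  next
    case none
    then have "s = 0" by (simp add: s_def)
    moreover have "0 \<le> \<beta> * (2 * \<beta> - x - y)" "0 \<le> \<tau> * (2 * \<beta> - x - y)" "0 \<le> (2 - \<beta>) * (2 * \<beta> - x - y)"
      using none \<tau> \<beta> by simp_all
    ultimately show ?thesis using none sq \<tau> \<beta> by (auto simp: power2_eq_square algebra_simps)
  qed
  then show "0 \<le> s" "(2 - \<beta>) * (x + y) - 2 \<le> (1 - \<beta>) * s"
    "1/2 \<le> \<beta> \<Longrightarrow> \<beta> * (x + y) - 2 * \<beta>\<^sup>2 \<le> (1 - \<beta>) * s"
    "\<beta> < 1/2 \<Longrightarrow> \<tau> * (x + y) - 2 * (\<tau> * \<beta>) \<le> (1 + \<tau> - 2 * \<beta>) * s"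
    "\<beta> < 1/2 \<Longrightarrow> (x + y) - 1 \<le> s" by auto
qed

lemma pair_lp_values_lower_bounds:
  assumes eigs: "\<forall>i<n. lam i = 1 \<or> \<tau> \<le> lam i \<and> lam i \<le> \<beta>"
    and \<tau>: "0 \<le> \<tau>" "\<tau> \<le> \<beta>" and \<beta>: "\<beta> < 1"
    and y: "y \<in> pair_lp_values n lam \<delta>"
  shows "0 \<le> y" and "(2 - \<beta>) * \<delta> - 1 \<le> (1 - \<beta>) * y"
    and "1/2 \<le> \<beta> \<Longrightarrow> \<beta> * \<delta> - \<beta>\<^sup>2 \<le> (1 - \<beta>) * y"
    and "\<beta> < 1/2 \<Longrightarrow> \<tau> * \<delta> - \<tau> * \<beta> \<le> (1 + \<tau> - 2 * \<beta>) * y"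
    and "\<beta> < 1/2 \<Longrightarrow> \<delta> - 1/2 \<le> y"
proof -
  obtain w where w: "sym_pair_distr n w"
    and y_eq: "y = (\<Sum>i<n. \<Sum>j<n. lam i * of_bool (lam j = 1) * w i j)"
    and \<delta>: "\<delta> \<le> (\<Sum>i<n. \<Sum>j<n. lam i * w i j)"
    using y unfolding pair_lp_values_def by blast
  define p where "p = (\<Sum>i<n. \<Sum>j<n. lam i * w i j)"
  have bound: "a * p + b \<le> c * y"
    if pt: "\<And>x z. x = 1 \<or> \<tau> \<le> x \<and> x \<le> \<beta> \<Longrightarrow> z = 1 \<or> \<tau> \<le> z \<and> z \<le> \<beta> \<Longrightarrow>
      a * (x + z) + 2 * b \<le> c * (x * of_bool (z = 1) + z * of_bool (x = 1))" for a b c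
    unfolding p_def y_eq by (rule sym_pair_distr_linear_bound[OF w]) (simp add: pt eigs)
  note pair = spectral_pair_bounds[OF _ _ \<tau> \<beta>]
  have "p \<ge> \<delta>" using \<delta> p_def by simp
  then have scaled: "t * \<delta> \<le> t * p" if "0 \<le> t" for t using that by (rule mult_left_mono)
  show "0 \<le> y" using bound[of 0 0 1] pair(1) by simp
  show "(2 - \<beta>) * \<delta> - 1 \<le> (1 - \<beta>) * y"
    using bound[of "2 - \<beta>" "-1" "1 - \<beta>"] pair(2) scaled[of "2 - \<beta>"] \<beta> by (simp add: algebra_simps)
  show "\<beta> * \<delta> - \<beta>\<^sup>2 \<le> (1 - \<beta>) * y" if "1/2 \<le> \<beta>"
    using bound[of \<beta> "- \<beta>\<^sup>2" "1 - \<beta>"] pair(3)[OF _ _ that] scaled[of \<beta>] \<tau> by (simp add: algebra_simps)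
  show "\<tau> * \<delta> - \<tau> * \<beta> \<le> (1 + \<tau> - 2 * \<beta>) * y" if "\<beta> < 1/2"
    using bound[of \<tau> "- (\<tau> * \<beta>)" "1 + \<tau> - 2 * \<beta>"] pair(4)[OF _ _ that] scaled[of \<tau>] \<tau>
    by (simp add: algebra_simps)
  show "\<delta> - 1/2 \<le> y" if "\<beta> < 1/2"
    using bound[of 1 "- 1/2" 1] pair(5)[OF _ _ that] scaled[of 1] by (simp add: algebra_simps)
qed

(* The vertices of that lower boundary, (beta, 0), ((1 + beta)/2, beta/2), ((1 + tau)/2, tau/2)
   and (1, 1), come from the symmetrised eigenpairs (beta, beta), (1, beta), (1, tau) and (1, 1);
   the chord lemmas below are named after the segments they join. *)
definition sym_pair_mass :: "nat \<Rightarrow> nat \<Rightarrow> nat \<Rightarrow> nat \<Rightarrow> real" where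
  "sym_pair_mass a b i j = (of_bool (i = a \<and> j = b) + of_bool (i = b \<and> j = a)) / 2"

lemma sym_pair_mass_nonneg: "0 \<le> sym_pair_mass a b i j"
  by (simp add: sym_pair_mass_def)

lemma sym_pair_mass_commute: "sym_pair_mass a b j i = sym_pair_mass a b i j"
  unfolding sym_pair_mass_def by (simp only: conj_commute add.commute)

lemma sum_sum_mult_sym_pair_mass:
  assumes "a < n" "b < n"
  shows "(\<Sum>i<n. \<Sum>j<n. f i j * sym_pair_mass a b i j) = (f a b + f b a) / 2"
proof -
  have "f i j * sym_pair_mass a b i j
      = ((if j = b then if i = a then f a b else 0 else 0) + (if j = a then if i = b then f b a else 0 else 0)) / 2"
    for i j by (simp add: sym_pair_mass_def distrib_left)
  then show ?thesis using assms by (simp only:) (simp add: sum.distrib flip: sum_divide_distrib)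
qed

lemma pair_lp_values_mixture:
  assumes idx: "ia < n" "ib < n" "ic < n" and lam: "lam ia = 1" "lam ib = \<beta>" "lam ic = \<tau>"
    and "\<tau> \<le> \<beta>" "\<beta> < 1"
    and c: "0 \<le> c1" "0 \<le> c2" "0 \<le> c3" "0 \<le> c4" "c1 + c2 + c3 + c4 = 1"
    and \<delta>: "\<delta> \<le> c1 * \<beta> + c2 * ((1 + \<beta>) / 2) + c3 * ((1 + \<tau>) / 2) + c4"
  shows "c2 * (\<beta> / 2) + c3 * (\<tau> / 2) + c4 \<in> pair_lp_values n lam \<delta>"
proof -
  define w where "w i j = c1 * sym_pair_mass ib ib i j + c2 * sym_pair_mass ia ib i j
    + c3 * sym_pair_mass ia ic i j + c4 * sym_pair_mass ia ia i j" for i j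
  have sums: "(\<Sum>i<n. \<Sum>j<n. f i j * w i j) = c1 * f ib ib + c2 * ((f ia ib + f ib ia) / 2)
    + c3 * ((f ia ic + f ic ia) / 2) + c4 * f ia ia" for f
  proof -
    have "(\<Sum>i<n. \<Sum>j<n. f i j * w i j) = c1 * (\<Sum>i<n. \<Sum>j<n. f i j * sym_pair_mass ib ib i j)
       + c2 * (\<Sum>i<n. \<Sum>j<n. f i j * sym_pair_mass ia ib i j)
       + c3 * (\<Sum>i<n. \<Sum>j<n. f i j * sym_pair_mass ia ic i j)
       + c4 * (\<Sum>i<n. \<Sum>j<n. f i j * sym_pair_mass ia ia i j)"
      unfolding w_def by (simp add: distrib_left sum.distrib sum_distrib_left mult_ac)
    then show ?thesis using idx by (simp add: sum_sum_mult_sym_pair_mass)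
  qed
  have "sym_pair_distr n w"
  proof -
    have "0 \<le> w i j" for i j
      unfolding w_def using c by (intro add_nonneg_nonneg mult_nonneg_nonneg sym_pair_mass_nonneg)
    moreover have "w i j = w j i" for i j
      unfolding w_def by (simp only: sym_pair_mass_commute)
    moreover have "(\<Sum>i<n. \<Sum>j<n. w i j) = 1"
      using sums[of "\<lambda>_ _. 1"] c(5) by simp
    ultimately show ?thesis unfolding sym_pair_distr_def by blast
  qed
  moreover have "\<delta> \<le> (\<Sum>i<n. \<Sum>j<n. lam i * w i j)"
    using \<delta> by (simp add: sums lam)
  moreover have "c2 * (\<beta> / 2) + c3 * (\<tau> / 2) + c4 = (\<Sum>i<n. \<Sum>j<n. lam i * of_bool (lam j = 1) * w i j)"
    using assms by (simp add: sums)
  ultimately show ?thesis unfolding pair_lp_values_def by blast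
qed

context
  fixes n :: nat and lam :: "nat \<Rightarrow> real" and \<beta> \<tau> :: real
  assumes eigs: "\<forall>i<n. lam i = 1 \<or> \<tau> \<le> lam i \<and> lam i \<le> \<beta>"
    and attained: "\<exists>i<n. lam i = 1" "\<exists>i<n. lam i = \<beta>" "\<exists>i<n. lam i = \<tau>"
    and \<tau>: "0 \<le> \<tau>" "\<tau> \<le> \<beta>" and \<beta>: "\<beta> < 1"
begin

lemma mixture_mem_pair_lp_values:
  assumes "0 \<le> c1" "0 \<le> c2" "0 \<le> c3" "0 \<le> c4" "c1 + c2 + c3 + c4 = 1"
    and "\<delta> \<le> c1 * \<beta> + c2 * ((1 + \<beta>) / 2) + c3 * ((1 + \<tau>) / 2) + c4"
  shows "c2 * (\<beta> / 2) + c3 * (\<tau> / 2) + c4 \<in> pair_lp_values n lam \<delta>"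
  using attained pair_lp_values_mixture[OF _ _ _ _ _ _ \<tau>(2) \<beta> assms] by blast

lemma zero_mem_pair_lp_values: "\<delta> \<le> \<beta> \<Longrightarrow> 0 \<in> pair_lp_values n lam \<delta>"
  using mixture_mem_pair_lp_values[of 1 0 0 0] by simp

lemma chord_pure_beta_mixed_beta_mem:
  assumes "\<beta> < \<delta>" "\<delta> \<le> (1 + \<beta>) / 2"
  shows "\<beta> * (\<delta> - \<beta>) / (1 - \<beta>) \<in> pair_lp_values n lam \<delta>"
proof -
  define s where "s = 2 * (\<delta> - \<beta>) / (1 - \<beta>)"
  have "0 \<le> s" "s \<le> 1" using assms \<beta> by (auto simp: s_def field_simps)
  \<comment> \<open>with \<open>\<beta> = 1 - e\<close> for an atom \<open>e > 0\<close>, field_simps can clear the denominator\<close>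
  moreover obtain e where e: "0 < e" "\<beta> = 1 - e" using \<beta> by (intro that[of "1 - \<beta>"]) auto
  then have p: "\<delta> = (1 - s) * \<beta> + s * ((1 + \<beta>) / 2) + 0 * ((1 + \<tau>) / 2) + 0"
    and f: "\<beta> * (\<delta> - \<beta>) / (1 - \<beta>) = s * (\<beta> / 2) + 0 * (\<tau> / 2) + 0"
    unfolding s_def e(2) by (simp_all add: field_simps)
  ultimately show ?thesis
    unfolding f by (intro mixture_mem_pair_lp_values[OF _ _ _ _ _ eq_refl[OF p]]) auto
qed

lemma chord_pure_beta_mixed_tau_mem:
  assumes "\<beta> < 1/2" "\<beta> < \<delta>" "\<delta> \<le> (1 + \<tau>) / 2"
  shows "\<tau> * (\<delta> - \<beta>) / (1 + \<tau> - 2 * \<beta>) \<in> pair_lp_values n lam \<delta>"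
proof -
  have gap: "0 < 1 + \<tau> - 2 * \<beta>" using assms(1) \<tau> by simp
  define s where "s = 2 * (\<delta> - \<beta>) / (1 + \<tau> - 2 * \<beta>)"
  have "0 \<le> s" "s \<le> 1" using assms gap by (auto simp: s_def field_simps)
  moreover obtain e where e: "0 < e" "\<tau> = e - 1 + 2 * \<beta>" using gap by (intro that[of "1 + \<tau> - 2 * \<beta>"]) auto
  then have p: "\<delta> = (1 - s) * \<beta> + 0 * ((1 + \<beta>) / 2) + s * ((1 + \<tau>) / 2) + 0"
    and f: "\<tau> * (\<delta> - \<beta>) / (1 + \<tau> - 2 * \<beta>) = 0 * (\<beta> / 2) + s * (\<tau> / 2) + 0"
    unfolding s_def e(2) by (simp_all add: field_simps)
  ultimately show ?thesis
    unfolding f by (intro mixture_mem_pair_lp_values[OF _ _ _ _ _ eq_refl[OF p]]) auto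
qed

lemma chord_mixed_tau_mixed_beta_mem:
  assumes "(1 + \<tau>) / 2 < \<delta>" "\<delta> \<le> (1 + \<beta>) / 2"
  shows "\<delta> - 1/2 \<in> pair_lp_values n lam \<delta>"
proof -
  define s where "s = (2 * \<delta> - 1 - \<tau>) / (\<beta> - \<tau>)"
  have "\<tau> < \<beta>" using assms by simp
  then have "0 \<le> s" "s \<le> 1" using assms by (auto simp: s_def field_simps)
  moreover obtain e where e: "0 < e" "\<beta> = \<tau> + e" using \<open>\<tau> < \<beta>\<close> by (intro that[of "\<beta> - \<tau>"]) auto
  then have p: "\<delta> = 0 * \<beta> + s * ((1 + \<beta>) / 2) + (1 - s) * ((1 + \<tau>) / 2) + 0"
    and f: "\<delta> - 1/2 = s * (\<beta> / 2) + (1 - s) * (\<tau> / 2) + 0"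
    unfolding s_def e(2) by (simp_all add: field_simps)
  ultimately show ?thesis
    unfolding f by (intro mixture_mem_pair_lp_values[OF _ _ _ _ _ eq_refl[OF p]]) auto
qed

lemma chord_mixed_beta_pure_one_mem:
  assumes "(1 + \<beta>) / 2 \<le> \<delta>" "\<delta> \<le> 1"
  shows "(\<delta> * (2 - \<beta>) - 1) / (1 - \<beta>) \<in> pair_lp_values n lam \<delta>"
proof -
  define s where "s = (2 * \<delta> - 1 - \<beta>) / (1 - \<beta>)"
  have "0 \<le> s" "s \<le> 1" using assms \<beta> by (auto simp: s_def field_simps)
  moreover obtain e where e: "0 < e" "\<beta> = 1 - e" using \<beta> by (intro that[of "1 - \<beta>"]) auto
  then have p: "\<delta> = 0 * \<beta> + (1 - s) * ((1 + \<beta>) / 2) + 0 * ((1 + \<tau>) / 2) + s"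
    and f: "(\<delta> * (2 - \<beta>) - 1) / (1 - \<beta>) = (1 - s) * (\<beta> / 2) + 0 * (\<tau> / 2) + s"
    unfolding s_def e(2) by (simp_all add: field_simps)
  ultimately show ?thesis
    unfolding f by (intro mixture_mem_pair_lp_values[OF _ _ _ _ _ eq_refl[OF p]]) auto
qed

lemma is_min_pair_lp_values_high:
  assumes "1/2 \<le> \<beta>" "0 \<le> \<delta>" "\<delta> \<le> 1"
  shows "is_min (pair_lp_values n lam \<delta>)
           (if \<delta> \<le> \<beta> then 0
            else if \<delta> \<le> (1 + \<beta>) / 2 then \<beta> * (\<delta> - \<beta>) / (1 - \<beta>)
            else (\<delta> * (2 - \<beta>) - 1) / (1 - \<beta>))"
  unfolding is_min_def
proof (intro conjI ballI)
  show "(if \<delta> \<le> \<beta> then 0 else if \<delta> \<le> (1 + \<beta>) / 2 then \<beta> * (\<delta> - \<beta>) / (1 - \<beta>)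
      else (\<delta> * (2 - \<beta>) - 1) / (1 - \<beta>)) \<in> pair_lp_values n lam \<delta>"
    using zero_mem_pair_lp_values chord_pure_beta_mixed_beta_mem chord_mixed_beta_pure_one_mem assms
    by auto
  fix y assume "y \<in> pair_lp_values n lam \<delta>"
  note bounds = pair_lp_values_lower_bounds[OF eigs \<tau> \<beta> this]
  show "(if \<delta> \<le> \<beta> then 0 else if \<delta> \<le> (1 + \<beta>) / 2 then \<beta> * (\<delta> - \<beta>) / (1 - \<beta>)
      else (\<delta> * (2 - \<beta>) - 1) / (1 - \<beta>)) \<le> y"
    using bounds(1,2) bounds(3)[OF assms(1)] \<beta> by (auto simp: pos_divide_le_eq power2_eq_square algebra_simps)
qed

lemma is_min_pair_lp_values_low:
  assumes "\<beta> < 1/2" "0 \<le> \<delta>" "\<delta> \<le> 1"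
  shows "is_min (pair_lp_values n lam \<delta>)
           (if \<delta> \<le> \<beta> then 0
            else if \<delta> \<le> (1 + \<tau>) / 2 then \<tau> * (\<delta> - \<beta>) / (1 + \<tau> - 2 * \<beta>)
            else if \<delta> \<le> (1 + \<beta>) / 2 then \<delta> - 1/2
            else (\<delta> * (2 - \<beta>) - 1) / (1 - \<beta>))"
  unfolding is_min_def
proof (intro conjI ballI)
  show "(if \<delta> \<le> \<beta> then 0
      else if \<delta> \<le> (1 + \<tau>) / 2 then \<tau> * (\<delta> - \<beta>) / (1 + \<tau> - 2 * \<beta>)
      else if \<delta> \<le> (1 + \<beta>) / 2 then \<delta> - 1/2
      else (\<delta> * (2 - \<beta>) - 1) / (1 - \<beta>)) \<in> pair_lp_values n lam \<delta>"
    using zero_mem_pair_lp_values chord_pure_beta_mixed_tau_mem chord_mixed_tau_mixed_beta_mem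
      chord_mixed_beta_pure_one_mem assms
    by auto
  fix y assume "y \<in> pair_lp_values n lam \<delta>"
  note bounds = pair_lp_values_lower_bounds[OF eigs \<tau> \<beta> this]
  have "0 < 1 + \<tau> - 2 * \<beta>" using assms \<tau> by simp
  then show "(if \<delta> \<le> \<beta> then 0
      else if \<delta> \<le> (1 + \<tau>) / 2 then \<tau> * (\<delta> - \<beta>) / (1 + \<tau> - 2 * \<beta>)
      else if \<delta> \<le> (1 + \<beta>) / 2 then \<delta> - 1/2
      else (\<delta> * (2 - \<beta>) - 1) / (1 - \<beta>)) \<le> y"
    using bounds(1,2) bounds(4,5)[OF assms(1)] \<beta> by (auto simp: pos_divide_le_eq algebra_simps)
qed

end

section \<open>Reduction of the verification problem to the linear program\<close>

context
  fixes D :: nat and W :: "complex mat"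
  assumes W: "unitary_mat (D * D) W" and swap_W: "swap_op D * W = W * swap_op D"
begin

lemma adj_commute_swap_op: "adj W * swap_op D = swap_op D * adj W"
  using arg_cong[OF swap_W, of adj] unitary_matD(1,2)[OF W]
  by (simp add: adj_mult[of _ "D * D" "D * D" _ "D * D"])

lemma sym_pair_distr_of_state:
  assumes \<rho>: "density_op (D * D) \<rho>" "perm_invariant2 D \<rho>"
  shows "sym_pair_distr D (\<lambda>i j. Re ((adj W * \<rho> * W) $$ (i * D + j, i * D + j)))"
proof -
  define R where "R = adj W * \<rho> * W"
  have \<rho>c: "\<rho> \<in> carrier_mat (D * D) (D * D)" and psd: "psd \<rho>" and tr: "mtrace \<rho> = 1"
    using \<rho>(1) unfolding density_op_def by auto
  have R: "R \<in> carrier_mat (D * D) (D * D)" using unitary_conj_carrier[OF W \<rho>c] by (simp add: R_def)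
  have "0 \<le> Re (R $$ (k, k))" if "k < D * D" for k
    using psd \<rho>c that unitary_matD(1,2)[OF W]
    unfolding R_def index_unitary_conj_diag[OF W \<rho>c that] psd_def by auto
  moreover have "R $$ (j * D + i, j * D + i) = R $$ (i * D + j, i * D + j)" if "i < D" "j < D" for i j
  proof -
    have "swap_op D * \<rho> * swap_op D = \<rho>" using \<rho>(2) unfolding perm_invariant2_def by simp
    then have "swap_op D * R * swap_op D = R"
      using swap_op_conj_commute[OF unitary_matD(2)[OF W] unitary_matD(1)[OF W] \<rho>c]
        swap_W adj_commute_swap_op by (simp add: R_def)
    then show ?thesis
      using swap_op_conj_index[OF R, of "i * D + j" "i * D + j"] pair_index_less[OF that] swap_idx_pair[OF that(2)]
      by simp
  qed
  moreover have "mtrace R = 1" using mtrace_unitary_conj[OF W \<rho>c] tr by (simp add: R_def)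
  then have "(\<Sum>k<D * D. R $$ (k, k)) = 1" using R by (simp add: mtrace_def)
  ultimately show ?thesis
    unfolding sym_pair_distr_def R_def[symmetric]
    using pair_index_less[of _ D _ D] by (auto simp: sum_lessThan_mult_nat simp flip: Re_sum)
qed

lemma perm_invariant_state_of_sym_pair_distr:
  assumes w: "sym_pair_distr D w"
  defines "\<rho> \<equiv> W * mk_diag (D * D) (\<lambda>k. complex_of_real (w (k div D) (k mod D))) * adj W"
  shows "density_op (D * D) \<rho>" and "perm_invariant2 D \<rho>"
proof -
  have w': "\<And>i j. i < D \<Longrightarrow> j < D \<Longrightarrow> 0 \<le> w i j \<and> w i j = w j i" "(\<Sum>i<D. \<Sum>j<D. w i j) = 1"
    using w unfolding sym_pair_distr_def by auto
  show "density_op (D * D) \<rho>"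
    unfolding \<rho>_def using w' div_mod_less_mult
    by (intro density_op_unitary_conj_mk_diag[OF W]) (auto simp: sum_lessThan_mult_nat)
  have "swap_op D * mk_diag (D * D) (\<lambda>k. complex_of_real (w (k div D) (k mod D))) * swap_op D
      = mk_diag (D * D) (\<lambda>k. complex_of_real (w (k div D) (k mod D)))"
    using w' div_mod_less_mult by (intro swap_op_conj_mk_diag) (auto simp: swap_idx_div swap_idx_mod)
  then show "perm_invariant2 D \<rho>"
    unfolding perm_invariant2_def \<rho>_def adj_swap_op
    using swap_op_conj_commute[OF unitary_matD(1)[OF W] unitary_matD(2)[OF W] mk_diag_carrier]
      swap_W adj_commute_swap_op by simp
qed

lemma Re_mtrace_mult_pair_diag:
  assumes X: "X \<in> carrier_mat (D * D) (D * D)"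
    and XW: "X * W = W * mk_diag (D * D) (\<lambda>k. complex_of_real (x (k div D) (k mod D)))"
    and \<rho>: "\<rho> \<in> carrier_mat (D * D) (D * D)"
  shows "Re (mtrace (X * \<rho>)) = (\<Sum>i<D. \<Sum>j<D. x i j * Re ((adj W * \<rho> * W) $$ (i * D + j, i * D + j)))"
proof -
  have "mtrace (X * \<rho>) = (\<Sum>k<D * D. complex_of_real (x (k div D) (k mod D)) * (adj W * \<rho> * W) $$ (k, k))"
    using mtrace_mult_unitary_conj[OF W X mk_diag_carrier XW \<rho>]
    by (simp add: mtrace_mk_diag_mult[OF unitary_conj_carrier[OF W \<rho>]])
  then show ?thesis by (simp add: sum_lessThan_mult_nat Re_sum)
qed

end

lemma proj_mult_vec:
  assumes "\<Psi> \<in> carrier_vec n" "u \<in> carrier_vec n"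
  shows "proj \<Psi> *\<^sub>v u = (u \<bullet>c \<Psi>) \<cdot>\<^sub>v \<Psi>"
proof (rule eq_vecI)
  fix i assume "i < dim_vec ((u \<bullet>c \<Psi>) \<cdot>\<^sub>v \<Psi>)"
  then have i: "i < n" using assms by simp
  have "(proj \<Psi> *\<^sub>v u) $ i = \<Psi> $ i * (\<Sum>j<n. u $ j * cnj (\<Psi> $ j))"
    using assms i by (simp add: proj_def scalar_prod_def atLeast0LessThan sum_distrib_left mult_ac)
  then show "(proj \<Psi> *\<^sub>v u) $ i = ((u \<bullet>c \<Psi>) \<cdot>\<^sub>v \<Psi>) $ i"
    using assms i by (simp add: scalar_prod_def atLeast0LessThan mult.commute)
qed (use assms in \<open>simp add: proj_def\<close>)

lemma proj_mult_eigenbasis: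
  assumes \<Omega>: "verification_op D \<Psi> \<Omega>" and U: "U \<in> carrier_mat D D"
    and \<Omega>U: "\<Omega> * U = U * mk_diag D (\<lambda>k. complex_of_real (lam k))"
  shows "proj \<Psi> * U = U * mk_diag D (\<lambda>k. of_bool (lam k = 1))"
proof -
  have \<Psi>: "\<Psi> \<in> carrier_vec D" "\<Psi> \<bullet>c \<Psi> = 1" and \<Omega>c: "\<Omega> \<in> carrier_mat D D" "adj \<Omega> = \<Omega>"
    and fix1: "\<Omega> *\<^sub>v \<Psi> = \<Psi>"
    and nondeg: "\<And>v. v \<in> carrier_vec D \<Longrightarrow> \<Omega> *\<^sub>v v = v \<Longrightarrow> \<exists>c. v = c \<cdot>\<^sub>v \<Psi>"
    using \<Omega> unfolding verification_op_def hermitian_mat_def by auto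
  have "proj \<Psi> *\<^sub>v u = of_bool (l = 1) \<cdot>\<^sub>v u"
    if u: "u \<in> carrier_vec D" "\<Omega> *\<^sub>v u = complex_of_real l \<cdot>\<^sub>v u" for u l
  proof (cases "l = 1")
    case True
    then obtain c where "u = c \<cdot>\<^sub>v \<Psi>" using nondeg[OF u(1)] u(2) by auto
    then show ?thesis using True \<Psi> by (simp add: proj_mult_vec)
  next
    case False
    have "complex_of_real l * (u \<bullet>c \<Psi>) = u \<bullet>c (adj \<Omega> *\<^sub>v \<Psi>)"
      using u \<Psi> cscalar_prod_adj[OF \<Omega>c(1) u(1) \<Psi>(1)] by simp
    then have "(complex_of_real l - 1) * (u \<bullet>c \<Psi>) = 0"
      using \<Omega>c(2) fix1 by (simp add: algebra_simps)
    then have "u \<bullet>c \<Psi> = 0" using False by simp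
    then show ?thesis using False \<Psi> u by (auto simp: proj_mult_vec intro: eq_vecI)
  qed
  moreover have "col U j \<in> carrier_vec D" "\<Omega> *\<^sub>v col U j = complex_of_real (lam j) \<cdot>\<^sub>v col U j"
    if "j < D" for j
    using U that \<Omega>U unfolding mult_eq_mult_mk_diag_iff[OF \<Omega>c(1) U] by auto
  moreover have "proj \<Psi> \<in> carrier_mat D D" using \<Psi> by (simp add: proj_def)
  ultimately show ?thesis by (simp add: mult_eq_mult_mk_diag_iff[OF _ U])
qed

lemma eigenvalue_nonneg_if_psd:
  assumes "psd A" "A \<in> carrier_mat n n" "eigenvalue A (complex_of_real l)"
  shows "0 \<le> l"
proof -
  obtain v where v: "v \<in> carrier_vec n" "v \<noteq> 0\<^sub>v n" "A *\<^sub>v v = complex_of_real l \<cdot>\<^sub>v v"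
    using assms(2,3) unfolding eigenvalue_def eigenvector_def by auto
  have "0 \<le> Re ((A *\<^sub>v v) \<bullet>c v)" using assms(1,2) v(1) unfolding psd_def by auto
  also have "(A *\<^sub>v v) \<bullet>c v = complex_of_real l * (v \<bullet>c v)" using v by simp
  finally have "0 \<le> l * Re (v \<bullet>c v)" by simp
  moreover have "0 < Re (v \<bullet>c v)"
    using conjugate_square_greater_0_vec[OF v(1)] v(2) by (simp add: less_complex_def)
  ultimately show ?thesis by (simp add: zero_le_mult_iff)
qed

lemma of_real_of_bool [simp]: "of_real (of_bool P) = of_bool P"
  by (cases P) simp_all

lemma two_copy_expectations:
  assumes \<Omega>: "verification_op D \<Psi> \<Omega>" and U: "unitary_mat D U"
    and \<Omega>U: "\<Omega> * U = U * mk_diag D (\<lambda>k. complex_of_real (lam k))"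
    and \<rho>: "\<rho> \<in> carrier_mat (D * D) (D * D)"
  defines "w i j \<equiv> Re ((adj (kron U U) * \<rho> * kron U U) $$ (i * D + j, i * D + j))"
  shows "p_val D \<Omega> \<rho> = (\<Sum>i<D. \<Sum>j<D. lam i * w i j)"
    and "f_val \<Psi> \<Omega> \<rho> = (\<Sum>i<D. \<Sum>j<D. lam i * of_bool (lam j = 1) * w i j)"
proof -
  note Uc = unitary_matD(1)[OF U]
  have \<Omega>c: "\<Omega> \<in> carrier_mat D D" and Pc: "proj \<Psi> \<in> carrier_mat D D"
    using \<Omega> unfolding verification_op_def by (auto simp: proj_def)
  have W: "unitary_mat (D * D) (kron U U)" and swap_W: "swap_op D * kron U U = kron U U * swap_op D"
    using unitary_kron[OF U U] swap_op_commute_kron_self[OF Uc] by simp_all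
  have "kron \<Omega> (1\<^sub>m D) * kron U U = kron U U * mk_diag (D * D) (\<lambda>k. complex_of_real (lam (k div D)))"
    using kron_mult_kron_eigenbasis[OF Uc \<Omega>c one_carrier_mat \<Omega>U, of "\<lambda>_. 1"] Uc
    by (simp add: one_mat_eq_mk_diag[symmetric])
  from Re_mtrace_mult_pair_diag[where x = "\<lambda>i j. lam i", OF W swap_W _ this \<rho>]
  show "p_val D \<Omega> \<rho> = (\<Sum>i<D. \<Sum>j<D. lam i * w i j)"
    using \<Omega>c unfolding p_val_def w_def by simp
  have "kron \<Omega> (proj \<Psi>) * kron U U
      = kron U U * mk_diag (D * D) (\<lambda>k. complex_of_real (lam (k div D) * of_bool (lam (k mod D) = 1)))"
    using kron_mult_kron_eigenbasis[OF Uc \<Omega>c Pc \<Omega>U proj_mult_eigenbasis[OF \<Omega> Uc \<Omega>U]] by simp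
  from Re_mtrace_mult_pair_diag[where x = "\<lambda>i j. lam i * of_bool (lam j = 1)", OF W swap_W _ this \<rho>]
  show "f_val \<Psi> \<Omega> \<rho> = (\<Sum>i<D. \<Sum>j<D. lam i * of_bool (lam j = 1) * w i j)"
    using \<Omega>c Pc unfolding f_val_def w_def by simp
qed

lemma feasible_f_eq_pair_lp_values:
  assumes \<Omega>: "verification_op D \<Psi> \<Omega>" and U: "unitary_mat D U"
    and \<Omega>U: "\<Omega> * U = U * mk_diag D (\<lambda>k. complex_of_real (lam k))"
  shows "feasible_f D \<Psi> \<Omega> \<delta> = pair_lp_values D lam \<delta>"
proof -
  define W where "W = kron U U"
  have W: "unitary_mat (D * D) W" and swap_W: "swap_op D * W = W * swap_op D"
    using unitary_kron[OF U U] swap_op_commute_kron_self[OF unitary_matD(1)[OF U]] by (simp_all add: W_def)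
  note expect = two_copy_expectations[OF \<Omega> U \<Omega>U, folded W_def]
  show ?thesis
  proof (intro equalityI subsetI)
    fix y assume "y \<in> feasible_f D \<Psi> \<Omega> \<delta>"
    then obtain \<rho> where \<rho>: "density_op (D * D) \<rho>" "perm_invariant2 D \<rho>" "\<delta> \<le> p_val D \<Omega> \<rho>"
      and y: "y = f_val \<Psi> \<Omega> \<rho>"
      unfolding feasible_f_def by blast
    have "\<rho> \<in> carrier_mat (D * D) (D * D)" using \<rho>(1) unfolding density_op_def by simp
    then show "y \<in> pair_lp_values D lam \<delta>"
      using sym_pair_distr_of_state[OF W swap_W \<rho>(1,2)] \<rho>(3) y expect
      unfolding pair_lp_values_def by auto
  next
    fix y assume "y \<in> pair_lp_values D lam \<delta>"
    then obtain v where v: "sym_pair_distr D v" "\<delta> \<le> (\<Sum>i<D. \<Sum>j<D. lam i * v i j)"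
      and y: "y = (\<Sum>i<D. \<Sum>j<D. lam i * of_bool (lam j = 1) * v i j)"
      unfolding pair_lp_values_def by blast
    define \<rho> where "\<rho> = W * mk_diag (D * D) (\<lambda>k. complex_of_real (v (k div D) (k mod D))) * adj W"
    note state = perm_invariant_state_of_sym_pair_distr[OF W swap_W v(1), folded \<rho>_def]
    have \<rho>c: "\<rho> \<in> carrier_mat (D * D) (D * D)" using state(1) unfolding density_op_def by simp
    have "Re ((adj W * \<rho> * W) $$ (i * D + j, i * D + j)) = v i j" if "i < D" "j < D" for i j
      using unitary_conj_of_conj[OF W mk_diag_carrier] pair_index_less[OF that] that by (simp add: \<rho>_def)
    then have "p_val D \<Omega> \<rho> = (\<Sum>i<D. \<Sum>j<D. lam i * v i j)" and "f_val \<Psi> \<Omega> \<rho> = y"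
      using expect[OF \<rho>c] y by simp_all
    then show "y \<in> feasible_f D \<Psi> \<Omega> \<delta>"
      using state v(2) unfolding feasible_f_def by auto
  qed
qed

theorem theorem4:
  fixes D :: nat and \<Psi> :: "complex vec" and \<Omega> :: "complex mat"
    and \<beta> \<tau> \<delta> :: real
  assumes "D \<ge> 2"
    and "verification_op D \<Psi> \<Omega>"
    and "second_eig \<Omega> \<beta>"
    and "smallest_eig \<Omega> \<tau>"
    and "0 \<le> \<delta>" and "\<delta> \<le> 1"
  shows "(\<beta> \<ge> 1/2 \<longrightarrow> is_min (feasible_f D \<Psi> \<Omega> \<delta>)
           (if \<delta> \<le> \<beta> then 0
            else if \<delta> \<le> (1 + \<beta>) / 2 then \<beta> * (\<delta> - \<beta>) / (1 - \<beta>)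
            else (\<delta> * (2 - \<beta>) - 1) / (1 - \<beta>))) \<and>
         (\<beta> < 1/2 \<longrightarrow> is_min (feasible_f D \<Psi> \<Omega> \<delta>)
           (if \<delta> \<le> \<beta> then 0
            else if \<delta> \<le> (1 + \<tau>) / 2 then \<tau> * (\<delta> - \<beta>) / (1 + \<tau> - 2 * \<beta>)
            else if \<delta> \<le> (1 + \<beta>) / 2 then \<delta> - 1/2
            else (\<delta> * (2 - \<beta>) - 1) / (1 - \<beta>)))"
proof -
  have \<Psi>: "\<Psi> \<in> carrier_vec D" "\<Psi> \<bullet>c \<Psi> = 1" and \<Omega>c: "\<Omega> \<in> carrier_mat D D"
    and herm: "hermitian_mat \<Omega>" and psd: "psd \<Omega>" and fix1: "\<Omega> *\<^sub>v \<Psi> = \<Psi>"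
    using assms(2) unfolding verification_op_def by auto
  obtain U lam where U: "unitary_mat D U" and \<Omega>U: "\<Omega> * U = U * mk_diag D (\<lambda>k. complex_of_real (lam k))"
    using hermitian_unitary_diagonalization[OF \<Omega>c herm] by blast
  have eig: "eigenvalue \<Omega> (complex_of_real l) \<longleftrightarrow> (\<exists>k<D. lam k = l)" for l
    using eigenvalue_similar_mk_diag_iff[OF \<Omega>c similar_mat_unitary[OF U \<Omega>c mk_diag_carrier \<Omega>U]] by simp
  have "eigenvalue \<Omega> 1"
    using \<Psi> \<Omega>c fix1 unfolding eigenvalue_def eigenvector_def by (auto intro!: exI[of _ \<Psi>])
  then have "\<exists>k<D. lam k = 1" using eig[of 1] by simp
  moreover note \<beta> = assms(3)[unfolded second_eig_def] and \<tau> = assms(4)[unfolded smallest_eig_def]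
  moreover have "0 \<le> \<tau>" using eigenvalue_nonneg_if_psd[OF psd \<Omega>c] \<tau> by blast
  ultimately have "\<forall>k<D. lam k = 1 \<or> \<tau> \<le> lam k \<and> lam k \<le> \<beta>"
    and "\<exists>k<D. lam k = 1" "\<exists>k<D. lam k = \<beta>" "\<exists>k<D. lam k = \<tau>"
    and "0 \<le> \<tau>" "\<tau> \<le> \<beta>" "\<beta> < 1"
    using eig by auto
  note lp = this
  show ?thesis
    unfolding feasible_f_eq_pair_lp_values[OF assms(2) U \<Omega>U]
    using is_min_pair_lp_values_high[OF lp] is_min_pair_lp_values_low[OF lp] assms(5,6) by blast
qed

end
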